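(* Let $\mathbf{a}=(a_1,a_2,a_3,a_4)\in\mathbb C^4$ and let $$S_{\mathbf a}=\{(x_1,x_2,x_3)\in\mathbb C^3 : x_1^2+x_2^2+x_3^2+x_1x_2x_3=a_1x_1+a_2x_2+a_3x_3+a_4\}.$$ Consider on the smooth part of $S_{\mathbf a}$ the three holomorphic foliations $\mathcal F_i=\ker(dx_i|_{S_{\mathbf a}})$, $i=1,2,3$ (the level curves of the coordinates), and the $3$-web $(\mathcal F_1,\mathcal F_2,\mathcal F_3)$ they form on the nonempty open set of points where it is regular. Then this $3$-web is locally parallelizable (at every point of that open set) if and only if $\mathbf a=(0,0,0,4)$.
   Context: A (local) regular $3$-web on a complex surface is a triple of pairwise transversal holomorphic foliations. It is locally parallelizable if near each point there are local holomorphic coordinates $(u,v)$ in which each of the three foliations is defined by a constant $1$-form $\alpha_i du+\beta_i dv$ ($\alpha_i,\beta_i\in\mathbb C$), i.e. is a foliation by parallel lines. *)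

theory Defs
  imports "HOL-Analysis.Analysis"
begin

definition Fa :: "complex^4 \<Rightarrow> complex^3 \<Rightarrow> complex" where
  "Fa a x = (x$1)^2 + (x$2)^2 + (x$3)^2 + x$1 * x$2 * x$3
            - (a$1 * x$1 + a$2 * x$2 + a$3 * x$3 + a$4)"

definition Sa :: "complex^4 \<Rightarrow> (complex^3) set" where
  "Sa a = {x. Fa a x = 0}"

definition smooth_pt :: "complex^4 \<Rightarrow> complex^3 \<Rightarrow> bool" where
  "smooth_pt a p \<longleftrightarrow> p \<in> Sa a \<and> frechet_derivative (Fa a) (at p) \<noteq> (\<lambda>v. 0)"

definition tangent_plane :: "complex^4 \<Rightarrow> complex^3 \<Rightarrow> (complex^3) set" where
  "tangent_plane a p = {v. frechet_derivative (Fa a) (at p) v = 0}"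

text \<open>The 3-web (F_1,F_2,F_3), F_i = ker (dx_i restricted to S_a), is regular at p if
  p is a smooth point and the three foliations are pairwise transversal at p, i.e. for
  i \<noteq> j the tangent lines ker(dx_i|T_pS) and ker(dx_j|T_pS) meet only in 0
  (this also forces each dx_i|T_pS to be nonzero, so each F_i is nonsingular at p).\<close>

definition web_regular :: "complex^4 \<Rightarrow> complex^3 \<Rightarrow> bool" where
  "web_regular a p \<longleftrightarrow> smooth_pt a p \<and>
     (\<forall>i j. i \<noteq> j \<longrightarrow>
        (\<forall>v \<in> tangent_plane a p. v$i = 0 \<and> v$j = 0 \<longrightarrow> v = 0))"

definition holo_map :: "(complex^2 \<Rightarrow> complex^3) \<Rightarrow> (complex^2 \<Rightarrow> complex^2 \<Rightarrow> complex^3)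
    \<Rightarrow> (complex^2) set \<Rightarrow> bool" where
  "holo_map psi Dpsi V \<longleftrightarrow> open V \<and>
     (\<forall>z\<in>V. (psi has_derivative Dpsi z) (at z) \<and>
             (\<forall>(c::complex) w. Dpsi z (c *s w) = c *s Dpsi z w))"

text \<open>The web is locally parallelizable at p: there are local holomorphic coordinates
  (u,v) on S_a near p (given by their inverse psi : V \<rightarrow> S_a \<inter> N, a holomorphic
  homeomorphism onto an open neighbourhood of p in S_a, inside the regular set, with
  injective differential, i.e. a biholomorphism), in which each foliation F_i is defined
  by a constant 1-form alpha_i du + beta_i dv, i.e. the kernel of the pull-back of dx_i
  at every point equals the kernel of alpha_i du + beta_i dv with (alpha_i,beta_i) \<noteq> 0.\<close>

definition locally_parallelizable_at :: "complex^4 \<Rightarrow> complex^3 \<Rightarrow> bool" where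
  "locally_parallelizable_at a p \<longleftrightarrow>
     (\<exists>V N psi phi Dpsi.
        open N \<and> p \<in> N \<and> Sa a \<inter> N \<subseteq> {q. web_regular a q} \<and>
        holo_map psi Dpsi V \<and>
        homeomorphism V (Sa a \<inter> N) psi phi \<and>
        (\<forall>z\<in>V. inj (Dpsi z)) \<and>
        (\<forall>i::3. \<exists>\<alpha> \<beta> :: complex. (\<alpha>, \<beta>) \<noteq> (0, 0) \<and>
           (\<forall>z\<in>V. {w. (Dpsi z w)$i = 0} = {w. \<alpha> * w$1 + \<beta> * w$2 = 0})))"

end

theory Submission
  imports Defs "HOL-Complex_Analysis.Complex_Analysis"
begin

text \<open>Suppose the web is parallelizable near a regular point. In the affine coordinates \<open>(s, t)\<close>
  of the parallelization the coordinates \<open>x\<^sub>i, x\<^sub>j, x\<^sub>k\<close> become functions \<open>f(s)\<close>, \<open>g(t)\<close>,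
  \<open>h(c s + d t)\<close> with \<open>F(f, g, h) = 0\<close>. Differentiating this identity twice shows that
  \<open>f''/f'\<^sup>2\<close>, a rational function on the surface, depends on \<open>x\<^sub>i\<close> only; hence a polynomial
  obstruction vanishes at every regular point, for every ordering of the coordinates and also after
  the symmetry \<open>(x\<^sub>i, x\<^sub>j, a\<^sub>i, a\<^sub>j) \<mapsto> -(x\<^sub>i, x\<^sub>j, a\<^sub>i, a\<^sub>j)\<close> of the surface. On the conic
  \<open>x\<^sub>1 = 2\<close> of the surface the obstruction is a polynomial whose leading coefficient vanishes only
  if \<open>a\<^sub>j = a\<^sub>k\<close>; so \<open>a\<^sub>j = a\<^sub>k = -a\<^sub>k\<close>, i.e.\ \<open>a\<^sub>1 = a\<^sub>2 = a\<^sub>3 = 0\<close>. Then on the surface the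
  obstruction is \<open>a\<^sub>4 - 4\<close> times a nonzero polynomial, which forces \<open>a\<^sub>4 = 4\<close>. Conversely, the
  Cayley cubic \<open>a = (0, 0, 0, 4)\<close> is parametrized by \<open>(2 cos u, 2 cos v, -2 cos (u + v))\<close>, in which
  the three foliations are \<open>u\<close>, \<open>v\<close> and \<open>u + v\<close> constant.\<close>

no_notation fps_nth (infixl \<open>$\<close> 75)

section \<open>The cubic surface and regular points of the web\<close>

definition cubic :: "complex \<Rightarrow> complex \<Rightarrow> complex \<Rightarrow> complex \<Rightarrow> complex \<Rightarrow> complex \<Rightarrow> complex \<Rightarrow> complex"
  where "cubic b1 b2 b3 b4 y1 y2 y3 = y1^2 + y2^2 + y3^2 + y1 * y2 * y3 - (b1 * y1 + b2 * y2 + b3 * y3 + b4)"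

text \<open>The partial derivative of \<^const>\<open>cubic\<close> in \<open>y\<^sub>i\<close> is \<open>cubic_partial b\<^sub>i y\<^sub>i y\<^sub>j y\<^sub>k\<close>
  for \<open>{i, j, k} = {1, 2, 3}\<close>.\<close>

definition cubic_partial :: "complex \<Rightarrow> complex \<Rightarrow> complex \<Rightarrow> complex \<Rightarrow> complex"
  where "cubic_partial b y z w = 2 * y + z * w - b"

definition lin_coeff :: "complex^4 \<Rightarrow> 3 \<Rightarrow> complex"
  where "lin_coeff a m = (if m = 1 then a$1 else if m = 2 then a$2 else a$3)"

lemma lin_coeff_simps [simp]: "lin_coeff a 1 = a$1" "lin_coeff a 2 = a$2" "lin_coeff a 3 = a$3"
  by (simp_all add: lin_coeff_def)

lemma Fa_eq_cubic: "Fa a x = cubic (a$1) (a$2) (a$3) (a$4) (x$1) (x$2) (x$3)"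
  by (simp add: Fa_def cubic_def)

lemma distinct_3_cases:
  fixes i j k :: 3
  assumes "i \<noteq> j" "i \<noteq> k" "j \<noteq> k"
  shows "(i, j, k) \<in> {(1, 2, 3), (1, 3, 2), (2, 1, 3), (2, 3, 1), (3, 1, 2), (3, 2, 1)}"
  using exhaust_3[of i] exhaust_3[of j] exhaust_3[of k] assms by auto

lemma cubic_permute:
  fixes i j k :: 3
  assumes "i \<noteq> j" "i \<noteq> k" "j \<noteq> k"
  shows "cubic (b 1) (b 2) (b 3) b4 (x$1) (x$2) (x$3) = cubic (b i) (b j) (b k) b4 (x$i) (x$j) (x$k)"
  using distinct_3_cases[OF assms] by (elim insertE emptyE) (simp_all add: cubic_def algebra_simps)

lemma cubic_neg_neg: "cubic (- b1) (- b2) b3 b4 (- y1) (- y2) y3 = cubic b1 b2 b3 b4 y1 y2 y3"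
  by (simp add: cubic_def power2_eq_square)

definition Fa_deriv :: "complex^4 \<Rightarrow> complex^3 \<Rightarrow> complex^3 \<Rightarrow> complex"
  where "Fa_deriv a p v =
           cubic_partial (a$1) (p$1) (p$2) (p$3) * v$1 + cubic_partial (a$2) (p$2) (p$1) (p$3) * v$2
           + cubic_partial (a$3) (p$3) (p$1) (p$2) * v$3"

lemma has_derivative_vec_nth_id [derivative_intros]: "((\<lambda>x. x $ i) has_derivative (\<lambda>x. x $ i)) F"
  by (rule bounded_linear_imp_has_derivative[OF bounded_linear_vec_nth])

lemma Fa_has_derivative: "(Fa a has_derivative Fa_deriv a p) (at p)"
proof -
  have "(Fa a has_derivative (\<lambda>v. 2 * p$1 * v$1 + 2 * p$2 * v$2 + 2 * p$3 * v$3
          + ((v$1 * p$2 + p$1 * v$2) * p$3 + p$1 * p$2 * v$3)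
          - (a$1 * v$1 + a$2 * v$2 + a$3 * v$3 + 0))) (at p)"
    unfolding Fa_def[abs_def] power2_eq_square
    by (rule derivative_eq_intros refl)+ (simp add: algebra_simps)
  then show ?thesis
    by (rule has_derivative_eq_rhs) (auto simp: Fa_deriv_def cubic_partial_def algebra_simps)
qed

lemma frechet_derivative_Fa: "frechet_derivative (Fa a) (at p) = Fa_deriv a p"
  using frechet_derivative_at[OF Fa_has_derivative] by simp

text \<open>A tangent vector with \<open>v\<^sub>i = v\<^sub>j = 0\<close> satisfies \<open>\<partial>\<^sub>kF \<cdot> v\<^sub>k = 0\<close>.\<close>

lemma web_regular_iff:
  "web_regular a p \<longleftrightarrow> Fa a p = 0 \<and> cubic_partial (a$1) (p$1) (p$2) (p$3) \<noteq> 0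
     \<and> cubic_partial (a$2) (p$2) (p$1) (p$3) \<noteq> 0 \<and> cubic_partial (a$3) (p$3) (p$1) (p$2) \<noteq> 0"
    (is "_ \<longleftrightarrow> _ \<and> ?P1 \<and> ?P2 \<and> ?P3")
proof -
  let ?transversal = "\<forall>i j. i \<noteq> j \<longrightarrow> (\<forall>v. Fa_deriv a p v = 0 \<longrightarrow> v$i = 0 \<and> v$j = 0 \<longrightarrow> v = 0)"
  have "?transversal \<longleftrightarrow> ?P1 \<and> ?P2 \<and> ?P3"
  proof
    assume transversal: ?transversal
    have "Fa_deriv a p (axis 1 1) \<noteq> 0"
      using transversal[rule_format, of 2 3 "axis 1 1"] axis_eq_0_iff[of 1 "1::complex"]
      by (auto simp del: axis_eq_0_iff simp: axis_def)
    moreover have "Fa_deriv a p (axis 2 1) \<noteq> 0"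
      using transversal[rule_format, of 1 3 "axis 2 1"] axis_eq_0_iff[of 2 "1::complex"]
      by (auto simp del: axis_eq_0_iff simp: axis_def)
    moreover have "Fa_deriv a p (axis 3 1) \<noteq> 0"
      using transversal[rule_format, of 1 2 "axis 3 1"] axis_eq_0_iff[of 3 "1::complex"]
      by (auto simp del: axis_eq_0_iff simp: axis_def)
    ultimately show "?P1 \<and> ?P2 \<and> ?P3" by (simp add: Fa_deriv_def axis_def)
  next
    assume partials: "?P1 \<and> ?P2 \<and> ?P3"
    show ?transversal
    proof (intro allI impI)
      fix i j :: 3 and v :: "complex^3"
      assume "i \<noteq> j" "Fa_deriv a p v = 0" "v$i = 0 \<and> v$j = 0"
      then have "v$1 = 0 \<and> v$2 = 0 \<and> v$3 = 0"
        using exhaust_3[of i] exhaust_3[of j] partials by (auto simp: Fa_deriv_def)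
      then show "v = 0" by (simp add: vec_eq_iff forall_3)
    qed
  qed
  moreover have "frechet_derivative (Fa a) (at p) \<noteq> (\<lambda>v. 0)" if ?P1
  proof -
    have "Fa_deriv a p (axis 1 1) \<noteq> 0" using that by (simp add: Fa_deriv_def axis_def)
    then show ?thesis by (metis frechet_derivative_Fa)
  qed
  ultimately show ?thesis
    by (auto simp: web_regular_def smooth_pt_def Sa_def tangent_plane_def frechet_derivative_Fa)
qed

section \<open>An obstruction to parallelizability\<close>

definition web_M :: "complex \<Rightarrow> complex \<Rightarrow> complex \<Rightarrow> complex \<Rightarrow> complex \<Rightarrow> complex \<Rightarrow> complex"
  where "web_M b1 b2 b3 y1 y2 y3 =
           cubic_partial b1 y1 y2 y3 * cubic_partial b2 y2 y1 y3 * cubic_partial b3 y3 y1 y2"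

definition web_N :: "complex \<Rightarrow> complex \<Rightarrow> complex \<Rightarrow> complex \<Rightarrow> complex \<Rightarrow> complex \<Rightarrow> complex"
  where "web_N b1 b2 b3 y1 y2 y3 =
    (let F1 = cubic_partial b1 y1 y2 y3; F2 = cubic_partial b2 y2 y1 y3; F3 = cubic_partial b3 y3 y1 y2
     in F2 * (2 * F3 - F1 * y2) - F1 * (y3 * F3 - F1 * y1))"

definition web_M_d2 :: "complex \<Rightarrow> complex \<Rightarrow> complex \<Rightarrow> complex \<Rightarrow> complex \<Rightarrow> complex \<Rightarrow> complex"
  where "web_M_d2 b1 b2 b3 y1 y2 y3 =
    (let F1 = cubic_partial b1 y1 y2 y3; F2 = cubic_partial b2 y2 y1 y3; F3 = cubic_partial b3 y3 y1 y2
     in y3 * F2 * F3 + 2 * F1 * F3 + y1 * F1 * F2)"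

definition web_M_d3 :: "complex \<Rightarrow> complex \<Rightarrow> complex \<Rightarrow> complex \<Rightarrow> complex \<Rightarrow> complex \<Rightarrow> complex"
  where "web_M_d3 b1 b2 b3 y1 y2 y3 =
    (let F1 = cubic_partial b1 y1 y2 y3; F2 = cubic_partial b2 y2 y1 y3; F3 = cubic_partial b3 y3 y1 y2
     in y2 * F2 * F3 + y1 * F1 * F3 + 2 * F1 * F2)"

definition web_N_d2 :: "complex \<Rightarrow> complex \<Rightarrow> complex \<Rightarrow> complex \<Rightarrow> complex \<Rightarrow> complex \<Rightarrow> complex"
  where "web_N_d2 b1 b2 b3 y1 y2 y3 =
    (let F1 = cubic_partial b1 y1 y2 y3; F2 = cubic_partial b2 y2 y1 y3; F3 = cubic_partial b3 y3 y1 y2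
     in 2 * (2 * F3 - F1 * y2) + F2 * (2 * y1 - (y3 * y2 + F1)) - y3 * (y3 * F3 - F1 * y1))"

definition web_N_d3 :: "complex \<Rightarrow> complex \<Rightarrow> complex \<Rightarrow> complex \<Rightarrow> complex \<Rightarrow> complex \<Rightarrow> complex"
  where "web_N_d3 b1 b2 b3 y1 y2 y3 =
    (let F1 = cubic_partial b1 y1 y2 y3; F2 = cubic_partial b2 y2 y1 y3; F3 = cubic_partial b3 y3 y1 y2
     in y1 * (2 * F3 - F1 * y2) + F2 * (4 - y2 * y2)
        - (y2 * (y3 * F3 - F1 * y1) + F1 * (F3 + 2 * y3 - y2 * y1)))"

text \<open>Along a linear web \<open>f(s), g(t), h(c s + d t)\<close> on the surface one has
  \<open>f'' / f'\<^sup>2 = - web_N / web_M\<close>, so \<open>web_N / web_M\<close> is constant along the leaves \<open>x\<^sub>1 = const\<close>,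
  whose tangent field is \<open>F\<^sub>3 \<partial>\<^sub>2 - F\<^sub>2 \<partial>\<^sub>3\<close>. The obstruction is \<open>web_M\<^sup>2\<close> times the derivative
  of \<open>web_N / web_M\<close> along this field; \<open>web_M_d2\<close>, \<dots>, \<open>web_N_d3\<close> are the partial derivatives
  in \<open>y\<^sub>2\<close> and \<open>y\<^sub>3\<close>.\<close>

definition web_obstruction :: "complex \<Rightarrow> complex \<Rightarrow> complex \<Rightarrow> complex \<Rightarrow> complex \<Rightarrow> complex \<Rightarrow> complex"
  where "web_obstruction b1 b2 b3 y1 y2 y3 =
    (let F2 = cubic_partial b2 y2 y1 y3; F3 = cubic_partial b3 y3 y1 y2
     in web_M b1 b2 b3 y1 y2 y3 * (F3 * web_N_d2 b1 b2 b3 y1 y2 y3 - F2 * web_N_d3 b1 b2 b3 y1 y2 y3)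
        - web_N b1 b2 b3 y1 y2 y3 * (F3 * web_M_d2 b1 b2 b3 y1 y2 y3 - F2 * web_M_d3 b1 b2 b3 y1 y2 y3))"

lemma cubic_has_derivative:
  assumes "(u has_field_derivative u') (at x)" "(v has_field_derivative v') (at x)"
    "(w has_field_derivative w') (at x)"
  shows "((\<lambda>\<sigma>. cubic b1 b2 b3 b4 (u \<sigma>) (v \<sigma>) (w \<sigma>)) has_field_derivative
           cubic_partial b1 (u x) (v x) (w x) * u' + cubic_partial b2 (v x) (u x) (w x) * v'
           + cubic_partial b3 (w x) (u x) (v x) * w') (at x)"
  unfolding cubic_def cubic_partial_def
  by (rule derivative_eq_intros assms refl)+ (simp add: algebra_simps)

lemma cubic_partial_has_derivative:
  assumes "(u has_field_derivative u') (at x)" "(v has_field_derivative v') (at x)"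
    "(w has_field_derivative w') (at x)"
  shows "((\<lambda>\<sigma>. cubic_partial b (u \<sigma>) (v \<sigma>) (w \<sigma>)) has_field_derivative
           2 * u' + v' * w x + v x * w') (at x)"
  unfolding cubic_partial_def
  by (rule derivative_eq_intros assms refl)+ (simp add: algebra_simps)

lemma web_M_has_derivative:
  assumes "(v has_field_derivative v') (at x)" "(w has_field_derivative w') (at x)"
  shows "((\<lambda>\<sigma>. web_M b1 b2 b3 y1 (v \<sigma>) (w \<sigma>)) has_field_derivative
           web_M_d2 b1 b2 b3 y1 (v x) (w x) * v' + web_M_d3 b1 b2 b3 y1 (v x) (w x) * w') (at x)"
  unfolding web_M_def cubic_partial_def
  by (rule derivative_eq_intros assms refl)+
     (simp add: web_M_d2_def web_M_d3_def cubic_partial_def Let_def algebra_simps)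

lemma web_N_has_derivative:
  assumes "(v has_field_derivative v') (at x)" "(w has_field_derivative w') (at x)"
  shows "((\<lambda>\<sigma>. web_N b1 b2 b3 y1 (v \<sigma>) (w \<sigma>)) has_field_derivative
           web_N_d2 b1 b2 b3 y1 (v x) (w x) * v' + web_N_d3 b1 b2 b3 y1 (v x) (w x) * w') (at x)"
  unfolding web_N_def cubic_partial_def Let_def
  by (rule derivative_eq_intros assms refl)+
     (simp add: web_N_d2_def web_N_d3_def cubic_partial_def Let_def algebra_simps)

lemma web_obstruction_b0:
  "web_obstruction 0 0 0 y1 y2 y3 =
     16 * (y1^2 + y2^2 + y3^2 + y1 * y2 * y3 - 4) * (y1^2 - y2^2) * (y2^2 - y3^2) * (y3^2 - y1^2)"
  unfolding web_obstruction_def web_M_def web_N_def web_M_d2_def web_M_d3_def web_N_d2_def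
    web_N_d3_def cubic_partial_def Let_def
  by algebra

section \<open>Linear webs on the cubic\<close>

lemma DERIV_zero_if_vanishes_on_open:
  fixes \<phi> :: "complex \<Rightarrow> complex"
  assumes "(\<phi> has_field_derivative D) (at x)" "open S" "x \<in> S" "\<And>y. y \<in> S \<Longrightarrow> \<phi> y = 0"
  shows "D = 0"
proof -
  have "((\<lambda>_. 0) has_field_derivative D) (at x)"
    by (rule has_field_derivative_transform_within_open[OF assms(1-3)]) (use assms(4) in auto)
  then show ?thesis using DERIV_const DERIV_unique by blast
qed

text \<open>A parametrization of the surface near a point in which the three coordinates are functions
  of \<open>s\<close>, \<open>t\<close> and \<open>c s + d t\<close> respectively, i.e.\ in which the web is given by three families
  of parallel lines.\<close>

locale linear_web =
  fixes b1 b2 b3 b4 c d :: complex and \<rho> :: real and f g h f' g' h' :: "complex \<Rightarrow> complex"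
  assumes on_cubic: "\<And>s t. cmod s < \<rho> \<Longrightarrow> cmod t < \<rho> \<Longrightarrow> cubic b1 b2 b3 b4 (f s) (g t) (h (c * s + d * t)) = 0"
    and f_deriv: "\<And>s. cmod s < \<rho> \<Longrightarrow> (f has_field_derivative f' s) (at s)"
    and g_deriv: "\<And>t. cmod t < \<rho> \<Longrightarrow> (g has_field_derivative g' t) (at t)"
    and h_deriv: "\<And>s t. cmod s < \<rho> \<Longrightarrow> cmod t < \<rho> \<Longrightarrow>
                   (h has_field_derivative h' (c * s + d * t)) (at (c * s + d * t))"
begin

lemma neg_first_two:
  "linear_web (- b1) (- b2) b3 b4 c d \<rho> (\<lambda>s. - f s) (\<lambda>t. - g t) h (\<lambda>s. - f' s) (\<lambda>t. - g' t) h'"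
  by unfold_locales (auto simp: cubic_neg_neg on_cubic h_deriv intro!: DERIV_minus f_deriv g_deriv)

lemma h_deriv_s:
  assumes "cmod s < \<rho>" "cmod t < \<rho>"
  shows "((\<lambda>\<sigma>. h (c * \<sigma> + d * t)) has_field_derivative h' (c * s + d * t) * c) (at s)"
proof -
  have "((\<lambda>\<sigma>. c * \<sigma> + d * t) has_field_derivative c) (at s)"
    by (auto intro!: derivative_eq_intros)
  from DERIV_chain2[OF h_deriv[OF assms] this] show ?thesis .
qed

lemma h_deriv_t:
  assumes "cmod s < \<rho>" "cmod t < \<rho>"
  shows "((\<lambda>\<tau>. h (c * s + d * \<tau>)) has_field_derivative h' (c * s + d * t) * d) (at t)"
proof -
  have "((\<lambda>\<tau>. c * s + d * \<tau>) has_field_derivative d) (at t)"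
    by (auto intro!: derivative_eq_intros)
  from DERIV_chain2[OF h_deriv[OF assms] this] show ?thesis .
qed

lemma first_order_s:
  assumes "cmod s < \<rho>" "cmod t < \<rho>"
  shows "cubic_partial b1 (f s) (g t) (h (c * s + d * t)) * f' s
         + cubic_partial b3 (h (c * s + d * t)) (f s) (g t) * (h' (c * s + d * t) * c) = 0"
proof -
  have "((\<lambda>\<sigma>. cubic b1 b2 b3 b4 (f \<sigma>) (g t) (h (c * \<sigma> + d * t))) has_field_derivative
      cubic_partial b1 (f s) (g t) (h (c * s + d * t)) * f' s
      + cubic_partial b2 (g t) (f s) (h (c * s + d * t)) * 0
      + cubic_partial b3 (h (c * s + d * t)) (f s) (g t) * (h' (c * s + d * t) * c)) (at s)"
    by (rule cubic_has_derivative[OF f_deriv DERIV_const h_deriv_s]) (use assms in auto)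
  from DERIV_zero_if_vanishes_on_open[OF this, of "ball 0 \<rho>"] show ?thesis
    using assms on_cubic by simp
qed

lemma first_order_t:
  assumes "cmod s < \<rho>" "cmod t < \<rho>"
  shows "cubic_partial b2 (g t) (f s) (h (c * s + d * t)) * g' t
         + cubic_partial b3 (h (c * s + d * t)) (f s) (g t) * (h' (c * s + d * t) * d) = 0"
proof -
  have "((\<lambda>\<tau>. cubic b1 b2 b3 b4 (f s) (g \<tau>) (h (c * s + d * \<tau>))) has_field_derivative
      cubic_partial b1 (f s) (g t) (h (c * s + d * t)) * 0
      + cubic_partial b2 (g t) (f s) (h (c * s + d * t)) * g' t
      + cubic_partial b3 (h (c * s + d * t)) (f s) (g t) * (h' (c * s + d * t) * d)) (at t)"
    by (rule cubic_has_derivative[OF DERIV_const g_deriv h_deriv_t]) (use assms in auto)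
  from DERIV_zero_if_vanishes_on_open[OF this, of "ball 0 \<rho>"] show ?thesis
    using assms on_cubic by simp
qed

lemma leaf_identity:
  assumes f'_deriv: "(f' has_field_derivative f2) (at 0)" and "d \<noteq> 0" and t: "cmod t < \<rho>"
  shows "web_M b1 b2 b3 (f 0) (g t) (h (d * t)) * f2
         + (f' 0)^2 * web_N b1 b2 b3 (f 0) (g t) (h (d * t)) = 0"
proof -
  have zero: "cmod (0::complex) < \<rho>" using le_less_trans[OF norm_ge_zero t] by simp
  let ?F1 = "\<lambda>\<sigma>. cubic_partial b1 (f \<sigma>) (g t) (h (c * \<sigma> + d * t))"
  let ?F2 = "\<lambda>\<sigma>. cubic_partial b2 (g t) (f \<sigma>) (h (c * \<sigma> + d * t))"
  have eliminated: "d * ?F1 \<sigma> * f' \<sigma> - c * ?F2 \<sigma> * g' t = 0" if "cmod \<sigma> < \<rho>" for \<sigma>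
    using arg_cong2[OF first_order_s[OF that t] first_order_t[OF that t], of "\<lambda>x y. d * x - c * y"]
    by (simp add: algebra_simps)
  have "((\<lambda>\<sigma>. d * ?F1 \<sigma> * f' \<sigma> - c * ?F2 \<sigma> * g' t) has_field_derivative
      d * ((2 * f' 0 + 0 * h (c * 0 + d * t) + g t * (h' (c * 0 + d * t) * c)) * f' 0 + ?F1 0 * f2)
      - c * ((2 * 0 + f' 0 * h (c * 0 + d * t) + f 0 * (h' (c * 0 + d * t) * c)) * g' t)) (at 0)"
    by (rule derivative_eq_intros f'_deriv refl
          cubic_partial_has_derivative[OF f_deriv[OF zero] DERIV_const h_deriv_s[OF zero t]]
          cubic_partial_has_derivative[OF DERIV_const f_deriv[OF zero] h_deriv_s[OF zero t]])+
       (simp add: algebra_simps)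
  from DERIV_zero_if_vanishes_on_open[OF this, of "ball 0 \<rho>"]
  have "d * ((2 * f' 0 + g t * (h' (d * t) * c)) * f' 0 + ?F1 0 * f2)
      - c * ((f' 0 * h (d * t) + f 0 * (h' (d * t) * c)) * g' t) = 0"
    using zero eliminated by simp
  moreover have "?F1 0 * f' 0 + cubic_partial b3 (h (d * t)) (f 0) (g t) * (h' (d * t) * c) = 0"
    using first_order_s[OF zero t] by simp
  moreover have "?F2 0 * g' t + cubic_partial b3 (h (d * t)) (f 0) (g t) * (h' (d * t) * d) = 0"
    using first_order_t[OF zero t] by simp
  ultimately have "d * (web_M b1 b2 b3 (f 0) (g t) (h (d * t)) * f2
      + (f' 0)^2 * web_N b1 b2 b3 (f 0) (g t) (h (d * t))) = 0"
    unfolding web_M_def web_N_def Let_def cubic_partial_def by simp algebra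
  then show ?thesis using \<open>d \<noteq> 0\<close> by simp
qed

lemma obstruction_vanishes:
  assumes f'_deriv: "(f' has_field_derivative f2) (at 0)" and "\<rho> > 0"
    and nonzero: "d \<noteq> 0" "f' 0 \<noteq> 0" "g' 0 \<noteq> 0"
  shows "web_obstruction b1 b2 b3 (f 0) (g 0) (h 0) = 0"
proof -
  have zero: "cmod (0::complex) < \<rho>" using \<open>\<rho> > 0\<close> by simp
  have h_deriv_0: "((\<lambda>\<tau>. h (d * \<tau>)) has_field_derivative h' 0 * d) (at 0)"
    using h_deriv_t[OF zero zero] by simp
  have "((\<lambda>\<tau>. web_M b1 b2 b3 (f 0) (g \<tau>) (h (d * \<tau>)) * f2
                + (f' 0)^2 * web_N b1 b2 b3 (f 0) (g \<tau>) (h (d * \<tau>))) has_field_derivative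
      (web_M_d2 b1 b2 b3 (f 0) (g 0) (h 0) * g' 0 + web_M_d3 b1 b2 b3 (f 0) (g 0) (h 0) * (h' 0 * d)) * f2
      + (f' 0)^2 * (web_N_d2 b1 b2 b3 (f 0) (g 0) (h 0) * g' 0
                    + web_N_d3 b1 b2 b3 (f 0) (g 0) (h 0) * (h' 0 * d))) (at 0)"
    by (rule derivative_eq_intros refl web_M_has_derivative[OF g_deriv[OF zero] h_deriv_0]
          web_N_has_derivative[OF g_deriv[OF zero] h_deriv_0])+ simp
  from DERIV_zero_if_vanishes_on_open[OF this, of "ball 0 \<rho>"]
  have "(web_M_d2 b1 b2 b3 (f 0) (g 0) (h 0) * g' 0 + web_M_d3 b1 b2 b3 (f 0) (g 0) (h 0) * (h' 0 * d)) * f2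
      + (f' 0)^2 * (web_N_d2 b1 b2 b3 (f 0) (g 0) (h 0) * g' 0
                    + web_N_d3 b1 b2 b3 (f 0) (g 0) (h 0) * (h' 0 * d)) = 0"
    using leaf_identity[OF f'_deriv \<open>d \<noteq> 0\<close>] zero by simp
  moreover have "cubic_partial b2 (g 0) (f 0) (h 0) * g' 0 + cubic_partial b3 (h 0) (f 0) (g 0) * (h' 0 * d) = 0"
    using first_order_t[OF zero zero] by simp
  moreover have "web_M b1 b2 b3 (f 0) (g 0) (h 0) * f2 + (f' 0)^2 * web_N b1 b2 b3 (f 0) (g 0) (h 0) = 0"
    using leaf_identity[OF f'_deriv \<open>d \<noteq> 0\<close> zero] by simp
  ultimately have "(f' 0)^2 * g' 0 * web_obstruction b1 b2 b3 (f 0) (g 0) (h 0) = 0"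
    unfolding web_obstruction_def Let_def by algebra
  then show ?thesis using nonzero by simp
qed

end

section \<open>Local parallelizability yields a linear web\<close>

definition linform :: "complex \<Rightarrow> complex \<Rightarrow> complex^2 \<Rightarrow> complex"
  where "linform \<alpha> \<beta> w = \<alpha> * w$1 + \<beta> * w$2"

lemma dual_basis_of_independent_forms:
  fixes \<alpha> \<beta> :: "3 \<Rightarrow> complex" and i j k :: 3
  assumes nonzero: "\<And>m. (\<alpha> m, \<beta> m) \<noteq> (0, 0)"
    and independent: "\<And>m n w. m \<noteq> n \<Longrightarrow> linform (\<alpha> m) (\<beta> m) w = 0 \<Longrightarrow> linform (\<alpha> n) (\<beta> n) w = 0 \<Longrightarrow> w = 0"
    and "i \<noteq> j" "i \<noteq> k" "j \<noteq> k"
  obtains u v where "linform (\<alpha> i) (\<beta> i) u = 1" "linform (\<alpha> j) (\<beta> j) u = 0"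
    "linform (\<alpha> i) (\<beta> i) v = 0" "linform (\<alpha> j) (\<beta> j) v = 1"
    "linform (\<alpha> k) (\<beta> k) u \<noteq> 0" "linform (\<alpha> k) (\<beta> k) v \<noteq> 0"
proof -
  define \<Delta> where "\<Delta> = \<alpha> i * \<beta> j - \<alpha> j * \<beta> i"
  have "\<Delta> \<noteq> 0"
  proof
    assume "\<Delta> = 0"
    then have "linform (\<alpha> i) (\<beta> i) (vector [- \<beta> i, \<alpha> i]) = 0"
      "linform (\<alpha> j) (\<beta> j) (vector [- \<beta> i, \<alpha> i]) = 0"
      by (simp_all add: linform_def \<Delta>_def algebra_simps)
    then have "(vector [- \<beta> i, \<alpha> i] :: complex^2) = 0" using independent \<open>i \<noteq> j\<close> by blast
    then have "\<alpha> i = 0" "\<beta> i = 0"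
      by (metis vector_2(2) zero_index, metis neg_equal_0_iff_equal vector_2(1) zero_index)
    then show False using nonzero[of i] by simp
  qed
  define u :: "complex^2" where "u = vector [\<beta> j / \<Delta>, - \<alpha> j / \<Delta>]"
  define v :: "complex^2" where "v = vector [- \<beta> i / \<Delta>, \<alpha> i / \<Delta>]"
  have u: "linform (\<alpha> i) (\<beta> i) u = 1" "linform (\<alpha> j) (\<beta> j) u = 0"
    and v: "linform (\<alpha> i) (\<beta> i) v = 0" "linform (\<alpha> j) (\<beta> j) v = 1"
    using \<open>\<Delta> \<noteq> 0\<close> by (simp_all add: linform_def u_def v_def field_simps) (simp_all add: \<Delta>_def algebra_simps)
  have "linform (\<alpha> k) (\<beta> k) u \<noteq> 0"
  proof
    assume "linform (\<alpha> k) (\<beta> k) u = 0"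
    then have "u = 0" using independent[of j k u] u \<open>j \<noteq> k\<close> by blast
    then show False using u(1) by (simp add: linform_def)
  qed
  moreover have "linform (\<alpha> k) (\<beta> k) v \<noteq> 0"
  proof
    assume "linform (\<alpha> k) (\<beta> k) v = 0"
    then have "v = 0" using independent[of i k v] v \<open>i \<noteq> k\<close> by blast
    then show False using v(2) by (simp add: linform_def)
  qed
  ultimately show thesis using that u v by blast
qed

lemma norm_vector_smult: "norm (c *s (w::complex^'n)) = cmod c * norm w"
proof -
  have "(\<lambda>i. norm ((c *s w)$i)) = (\<lambda>i. cmod c * norm (w$i))"
    by (simp add: norm_mult)
  then show ?thesis unfolding norm_vec_def by (simp add: L2_set_right_distrib)
qed

lemma bounded_linear_vector_smult_left: "bounded_linear (\<lambda>c::complex. c *s (w::complex^'n))"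
proof (rule bounded_linear_intro[where K="norm w"])
  show "(x + y) *s w = x *s w + y *s w" for x y :: complex by (rule vector_sadd_rdistrib)
  show "(r *\<^sub>R x) *s w = r *\<^sub>R (x *s w)" for r and x :: complex
    by (simp add: vec_eq_iff)
  show "norm (x *s w) \<le> norm x * norm w" for x :: complex by (simp add: norm_vector_smult)
qed

lemma holo_map_line_deriv:
  assumes "holo_map psi Dpsi V" and "z + x *s w \<in> V"
  shows "((\<lambda>\<tau>. psi (z + \<tau> *s w) $ m) has_field_derivative Dpsi (z + x *s w) w $ m) (at x)"
proof -
  have psi_deriv: "(psi has_derivative Dpsi (z + x *s w)) (at (z + x *s w))"
    and complex_linear: "\<And>c w'. Dpsi (z + x *s w) (c *s w') = c *s Dpsi (z + x *s w) w'"
    using assms unfolding holo_map_def by auto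
  have "((\<lambda>\<tau>. z + \<tau> *s w) has_derivative (\<lambda>c. c *s w)) (at x)"
    using bounded_linear_imp_has_derivative[OF bounded_linear_vector_smult_left[of w]]
    by (intro derivative_eq_intros) auto
  from diff_chain_at[OF this psi_deriv]
  have "((\<lambda>\<tau>. psi (z + \<tau> *s w) $ m) has_derivative (\<lambda>c. Dpsi (z + x *s w) (c *s w) $ m)) (at x)"
    by (auto simp: o_def intro: bounded_linear.has_derivative[OF bounded_linear_vec_nth])
  moreover have "(\<lambda>c. Dpsi (z + x *s w) (c *s w) $ m) = (*) (Dpsi (z + x *s w) w $ m)"
    by (rule ext) (simp add: complex_linear mult.commute)
  ultimately show ?thesis by (simp add: has_field_derivative_def)
qed

lemma holo_map_component_constant:
  assumes holo: "holo_map psi Dpsi V" and "convex C" "C \<subseteq> V" "z \<in> C" "z + w \<in> C"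
    and flat: "\<And>\<zeta>. \<zeta> \<in> C \<Longrightarrow> Dpsi \<zeta> w $ m = 0"
  shows "psi (z + w) $ m = psi z $ m"
proof -
  define T where "T = {\<tau>. z + \<tau> *s w \<in> C}"
  have "convex T"
    unfolding T_def convex_def
  proof (intro allI impI CollectI ballI)
    fix x y :: complex and \<theta> \<eta> :: real
    assume "x \<in> {\<tau>. z + \<tau> *s w \<in> C}" "y \<in> {\<tau>. z + \<tau> *s w \<in> C}" "0 \<le> \<theta>" "0 \<le> \<eta>" "\<theta> + \<eta> = 1"
    then have "\<theta> *\<^sub>R (z + x *s w) + \<eta> *\<^sub>R (z + y *s w) \<in> C"
      using \<open>convex C\<close> by (auto simp: convex_def)
    moreover have "\<theta> *\<^sub>R (z + x *s w) + \<eta> *\<^sub>R (z + y *s w) = z + (\<theta> *\<^sub>R x + \<eta> *\<^sub>R y) *s w"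
    proof -
      have "complex_of_real \<theta> + complex_of_real \<eta> = 1" using \<open>\<theta> + \<eta> = 1\<close> by (metis of_real_1 of_real_add)
      then show ?thesis
        by (simp only: vec_eq_iff vector_scaleR_component vector_add_component vector_smult_component)
           (simp add: scaleR_conv_of_real, algebra)
    qed
    ultimately show "z + (\<theta> *\<^sub>R x + \<eta> *\<^sub>R y) *s w \<in> C" by simp
  qed
  moreover have "((\<lambda>\<tau>. psi (z + \<tau> *s w) $ m) has_field_derivative 0) (at \<tau> within T)" if "\<tau> \<in> T" for \<tau>
    using holo_map_line_deriv[OF holo, of z \<tau> w m] flat[of "z + \<tau> *s w"] that \<open>C \<subseteq> V\<close>
    by (auto simp: T_def intro: has_field_derivative_at_within)
  ultimately obtain const where "\<forall>\<tau>\<in>T. psi (z + \<tau> *s w) $ m = const"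
    using has_field_derivative_zero_constant by blast
  moreover have "0 \<in> T" "1 \<in> T" using \<open>z \<in> C\<close> \<open>z + w \<in> C\<close> by (simp_all add: T_def)
  ultimately have "psi (z + 1 *s w) $ m = const" "psi (z + 0 *s w) $ m = const" by blast+
  then show ?thesis by simp
qed

lemma tangent_of_map_into_surface:
  assumes holo: "holo_map psi Dpsi V" and "z \<in> V" and on_surface: "\<And>\<zeta>. \<zeta> \<in> V \<Longrightarrow> Fa a (psi \<zeta>) = 0"
  shows "Dpsi z w \<in> tangent_plane a (psi z)"
proof -
  have "open V" and psi_deriv: "(psi has_derivative Dpsi z) (at z)"
    using holo \<open>z \<in> V\<close> unfolding holo_map_def by auto
  have "((\<lambda>\<zeta>. Fa a (psi \<zeta>)) has_derivative (\<lambda>w. Fa_deriv a (psi z) (Dpsi z w))) (at z)"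
    using diff_chain_at[OF psi_deriv Fa_has_derivative] by (simp add: o_def)
  then have "((\<lambda>_. 0) has_derivative (\<lambda>w. Fa_deriv a (psi z) (Dpsi z w))) (at z)"
    by (rule has_derivative_transform_within_open[OF _ \<open>open V\<close> \<open>z \<in> V\<close>]) (use on_surface in auto)
  from fun_cong[OF Deriv.has_derivative_zero_unique[OF this], of w] show ?thesis
    by (simp add: tangent_plane_def frechet_derivative_Fa)
qed

lemma parallelizable_kernel_forms:
  assumes reg: "web_regular a p" and lp: "locally_parallelizable_at a p"
  obtains psi Dpsi V z0 \<alpha> \<beta> where "holo_map psi Dpsi V" "z0 \<in> V" "psi z0 = p"
    "\<And>z. z \<in> V \<Longrightarrow> Fa a (psi z) = 0" "\<And>m. (\<alpha> m, \<beta> m) \<noteq> (0, 0)"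
    "\<And>z w m. z \<in> V \<Longrightarrow> Dpsi z w $ m = 0 \<longleftrightarrow> linform (\<alpha> m) (\<beta> m) w = 0"
    "\<And>m n w. m \<noteq> n \<Longrightarrow> linform (\<alpha> m) (\<beta> m) w = 0 \<Longrightarrow> linform (\<alpha> n) (\<beta> n) w = 0 \<Longrightarrow> w = 0"
proof -
  obtain V N psi phi Dpsi where "p \<in> N" and holo: "holo_map psi Dpsi V"
    and hom: "homeomorphism V (Sa a \<inter> N) psi phi" and inj: "\<forall>z\<in>V. inj (Dpsi z)"
    and par: "\<forall>m::3. \<exists>\<alpha> \<beta>::complex. (\<alpha>, \<beta>) \<noteq> (0, 0) \<and>
                 (\<forall>z\<in>V. {w. (Dpsi z w)$m = 0} = {w. \<alpha> * w$1 + \<beta> * w$2 = 0})"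
    using lp unfolding locally_parallelizable_at_def by blast
  obtain \<alpha> where "\<forall>m. \<exists>\<beta>::complex. (\<alpha> m, \<beta>) \<noteq> (0, 0) \<and>
                 (\<forall>z\<in>V. {w. (Dpsi z w)$m = 0} = {w. \<alpha> m * w$1 + \<beta> * w$2 = 0})"
    using choice[OF par] by blast
  from choice[OF this] obtain \<beta> :: "3 \<Rightarrow> complex" where nonzero: "\<And>m. (\<alpha> m, \<beta> m) \<noteq> (0, 0)"
    and kernels: "\<And>m z. z \<in> V \<Longrightarrow> {w. (Dpsi z w)$m = 0} = {w. \<alpha> m * w$1 + \<beta> m * w$2 = 0}"
    by blast
  have ker: "Dpsi z w $ m = 0 \<longleftrightarrow> linform (\<alpha> m) (\<beta> m) w = 0" if "z \<in> V" for z w m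
    using kernels[OF that, of m] by (auto simp: linform_def set_eq_iff)
  define z0 where "z0 = phi p"
  have "p \<in> Sa a" using reg by (simp add: web_regular_def smooth_pt_def)
  then have "z0 \<in> V" and "psi z0 = p"
    using hom \<open>p \<in> N\<close> unfolding homeomorphism_def z0_def by auto
  have on_surface: "Fa a (psi z) = 0" if "z \<in> V" for z
    using hom that unfolding homeomorphism_def Sa_def by auto
  have "w = 0" if "m \<noteq> n" "linform (\<alpha> m) (\<beta> m) w = 0" "linform (\<alpha> n) (\<beta> n) w = 0" for m n w
  proof -
    have "Dpsi z0 w \<in> tangent_plane a p"
      using tangent_of_map_into_surface[OF holo \<open>z0 \<in> V\<close> on_surface] \<open>psi z0 = p\<close> by simp
    moreover have "Dpsi z0 w $ m = 0" "Dpsi z0 w $ n = 0" using ker[OF \<open>z0 \<in> V\<close>] that by auto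
    moreover have "\<forall>v\<in>tangent_plane a p. v$m = 0 \<and> v$n = 0 \<longrightarrow> v = 0"
      using reg \<open>m \<noteq> n\<close> by (simp add: web_regular_def)
    ultimately have "Dpsi z0 w = 0" by blast
    moreover have "linear (Dpsi z0)"
      using holo \<open>z0 \<in> V\<close> has_derivative_linear unfolding holo_map_def by blast
    ultimately show ?thesis using inj \<open>z0 \<in> V\<close> by (metis injD linear_0)
  qed
  then show thesis using that[OF holo \<open>z0 \<in> V\<close> \<open>psi z0 = p\<close> on_surface nonzero ker] by blast
qed

lemma parallelizable_chart:
  fixes i j k :: 3
  assumes "web_regular a p" "locally_parallelizable_at a p" and ijk: "i \<noteq> j" "i \<noteq> k" "j \<noteq> k"
  obtains psi Dpsi V z0 v u d c where "holo_map psi Dpsi V" "z0 \<in> V" "psi z0 = p"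
    "\<And>z. z \<in> V \<Longrightarrow> Fa a (psi z) = 0"
    "\<And>z. z \<in> V \<Longrightarrow> Dpsi z v $ i = 0" "\<And>z. z \<in> V \<Longrightarrow> Dpsi z u $ j = 0"
    "\<And>z. z \<in> V \<Longrightarrow> Dpsi z (d *s u - c *s v) $ k = 0"
    "Dpsi z0 u $ i \<noteq> 0" "Dpsi z0 v $ j \<noteq> 0" "c \<noteq> 0" "d \<noteq> 0"
proof -
  obtain psi Dpsi V z0 \<alpha> \<beta> where holo: "holo_map psi Dpsi V" and "z0 \<in> V" "psi z0 = p"
    and on_surface: "\<And>z. z \<in> V \<Longrightarrow> Fa a (psi z) = 0" and nonzero: "\<And>m. (\<alpha> m, \<beta> m) \<noteq> (0, 0)"
    and ker: "\<And>z w m. z \<in> V \<Longrightarrow> Dpsi z w $ m = 0 \<longleftrightarrow> linform (\<alpha> m) (\<beta> m) w = 0"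
    and independent: "\<And>m n w. m \<noteq> n \<Longrightarrow> linform (\<alpha> m) (\<beta> m) w = 0 \<Longrightarrow> linform (\<alpha> n) (\<beta> n) w = 0 \<Longrightarrow> w = 0"
    by (rule parallelizable_kernel_forms[OF assms(1,2)]) (rule that)
  obtain u v where u: "linform (\<alpha> i) (\<beta> i) u = 1" "linform (\<alpha> j) (\<beta> j) u = 0"
    and v: "linform (\<alpha> i) (\<beta> i) v = 0" "linform (\<alpha> j) (\<beta> j) v = 1"
    and uv_k: "linform (\<alpha> k) (\<beta> k) u \<noteq> 0" "linform (\<alpha> k) (\<beta> k) v \<noteq> 0"
    by (rule dual_basis_of_independent_forms[of \<alpha> \<beta> i j k]) (use nonzero independent ijk in blast)+
  define c where "c = linform (\<alpha> k) (\<beta> k) u"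
  define d where "d = linform (\<alpha> k) (\<beta> k) v"
  have "linform (\<alpha> k) (\<beta> k) (d *s u - c *s v) = 0"
    by (simp add: linform_def c_def d_def algebra_simps)
  then show thesis
    using uv_k by (intro that[OF holo \<open>z0 \<in> V\<close> \<open>psi z0 = p\<close> on_surface, of v u d c])
      (simp_all add: ker \<open>z0 \<in> V\<close> u v c_def d_def)
qed

lemma affine_coordinate_radii:
  fixes u v :: "complex^'n"
  assumes "R > 0" "c \<noteq> 0"
  obtains \<rho> r where "0 < \<rho>" "\<rho> \<le> r"
    "\<And>s t. cmod s < r \<Longrightarrow> cmod t < r \<Longrightarrow> z0 + s *s u + t *s v \<in> ball z0 R"
    "\<And>s t. cmod s < \<rho> \<Longrightarrow> cmod t < \<rho> \<Longrightarrow> cmod ((c * s + d * t) / c) < r"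
proof -
  define r where "r = R / (norm u + norm v + 1)"
  have "r > 0" using \<open>R > 0\<close> by (simp add: r_def add_nonneg_pos)
  have in_ball: "z0 + s *s u + t *s v \<in> ball z0 R" if "cmod s < r" "cmod t < r" for s t
  proof -
    have "dist z0 (z0 + s *s u + t *s v) = norm (s *s u + t *s v)"
      by (metis add.assoc add_diff_cancel_left' dist_commute dist_norm)
    also have "\<dots> \<le> cmod s * norm u + cmod t * norm v"
      using norm_triangle_ineq[of "s *s u" "t *s v"] by (simp add: norm_vector_smult)
    also have "\<dots> \<le> r * (norm u + norm v)"
      using that by (simp add: distrib_left add_mono mult_right_mono)
    also have "\<dots> < r * (norm u + norm v + 1)" using \<open>r > 0\<close> by simp
    also have "\<dots> = R"
      using add_nonneg_pos[OF add_nonneg_nonneg[OF norm_ge_zero norm_ge_zero] zero_less_one, of u v]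
      by (simp add: r_def)
    finally show ?thesis by simp
  qed
  define \<rho> where "\<rho> = r / (1 + cmod (d / c))"
  have denom_pos: "1 + cmod (d / c) > 0" by (simp add: add_pos_nonneg)
  then have "\<rho> > 0" "\<rho> \<le> r" using \<open>r > 0\<close> by (simp_all add: \<rho>_def field_simps)
  moreover have "cmod ((c * s + d * t) / c) < r" if "cmod s < \<rho>" "cmod t < \<rho>" for s t
  proof -
    have "cmod ((c * s + d * t) / c) = cmod (s + (d / c) * t)" using \<open>c \<noteq> 0\<close> by (simp add: field_simps)
    also have "\<dots> \<le> cmod s + cmod (d / c) * cmod t" by (metis norm_mult norm_triangle_ineq)
    also have "\<dots> < \<rho> + cmod (d / c) * \<rho>" using that by (intro add_less_le_mono mult_left_mono) auto
    also have "\<dots> = (1 + cmod (d / c)) * \<rho>" by (simp add: algebra_simps)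
    also have "\<dots> = r" using denom_pos by (simp add: \<rho>_def)
    finally show ?thesis .
  qed
  ultimately show thesis using that in_ball by blast
qed

lemma linear_coordinates_of_flat_directions:
  assumes holo: "holo_map psi Dpsi V" and "z0 \<in> V" "c \<noteq> 0"
    and flat_i: "\<And>z. z \<in> V \<Longrightarrow> Dpsi z v $ i = 0"
    and flat_j: "\<And>z. z \<in> V \<Longrightarrow> Dpsi z u $ j = 0"
    and flat_k: "\<And>z. z \<in> V \<Longrightarrow> Dpsi z (d *s u - c *s v) $ k = 0"
  obtains \<rho> r where "0 < \<rho>" "\<rho> \<le> r"
    "\<And>s t. cmod s < r \<Longrightarrow> cmod t < r \<Longrightarrow> z0 + s *s u + t *s v \<in> V"
    "\<And>s t. cmod s < \<rho> \<Longrightarrow> cmod t < \<rho> \<Longrightarrow> cmod ((c * s + d * t) / c) < r"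
    "\<And>s t. cmod s < \<rho> \<Longrightarrow> cmod t < \<rho> \<Longrightarrow> psi (z0 + s *s u + t *s v) $ i = psi (z0 + s *s u) $ i"
    "\<And>s t. cmod s < \<rho> \<Longrightarrow> cmod t < \<rho> \<Longrightarrow> psi (z0 + s *s u + t *s v) $ j = psi (z0 + t *s v) $ j"
    "\<And>s t. cmod s < \<rho> \<Longrightarrow> cmod t < \<rho> \<Longrightarrow>
       psi (z0 + s *s u + t *s v) $ k = psi (z0 + ((c * s + d * t) / c) *s u) $ k"
proof -
  have "open V" and complex_linear: "\<And>z c w. z \<in> V \<Longrightarrow> Dpsi z (c *s w) = c *s Dpsi z w"
    using holo unfolding holo_map_def by auto
  obtain R where "R > 0" and ball_V: "ball z0 R \<subseteq> V"
    using \<open>open V\<close> \<open>z0 \<in> V\<close> open_contains_ball by blast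
  obtain \<rho> r where "0 < \<rho>" "\<rho> \<le> r"
    and in_ball: "\<And>s t. cmod s < r \<Longrightarrow> cmod t < r \<Longrightarrow> z0 + s *s u + t *s v \<in> ball z0 R"
    and shifted: "\<And>s t. cmod s < \<rho> \<Longrightarrow> cmod t < \<rho> \<Longrightarrow> cmod ((c * s + d * t) / c) < r"
    using affine_coordinate_radii[OF \<open>R > 0\<close> \<open>c \<noteq> 0\<close>] by blast
  have constant_along: "psi (z + w) $ m = psi z $ m"
    if "z \<in> ball z0 R" "z + w \<in> ball z0 R" "\<And>\<zeta>. \<zeta> \<in> V \<Longrightarrow> Dpsi \<zeta> w $ m = 0" for z w m
    using holo_map_component_constant[OF holo convex_ball ball_V] that ball_V by blast
  show thesis
  proof (rule that[OF \<open>\<rho> > 0\<close> \<open>\<rho> \<le> r\<close> _ shifted])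
    show "z0 + s *s u + t *s v \<in> V" if "cmod s < r" "cmod t < r" for s t
      using in_ball[OF that] ball_V by blast
    fix s t assume st: "cmod s < \<rho>" "cmod t < \<rho>"
    then have st_r: "cmod s < r" "cmod t < r" using \<open>\<rho> \<le> r\<close> by simp_all
    have zero: "cmod (0::complex) < r" using \<open>0 < \<rho>\<close> \<open>\<rho> \<le> r\<close> by simp
    show "psi (z0 + s *s u + t *s v) $ i = psi (z0 + s *s u) $ i"
      using constant_along[of "z0 + s *s u" "t *s v" i] in_ball[OF st_r] in_ball[OF st_r(1) zero]
      by (simp add: complex_linear flat_i)
    show "psi (z0 + s *s u + t *s v) $ j = psi (z0 + t *s v) $ j"
      using constant_along[of "z0 + t *s v" "s *s u" j] in_ball[OF st_r] in_ball[OF zero st_r(2)]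
      by (simp add: complex_linear flat_j add_ac)
    define w where "w = (- t / c) *s (d *s u - c *s v)"
    have sum: "z0 + ((c * s + d * t) / c) *s u + w = z0 + s *s u + t *s v"
      using \<open>c \<noteq> 0\<close> by (simp add: w_def vec_eq_iff field_simps)
    have flat_w: "Dpsi \<zeta> w $ k = 0" if "\<zeta> \<in> V" for \<zeta>
      using flat_k[OF that] unfolding w_def complex_linear[OF that] by simp
    have "psi (z0 + ((c * s + d * t) / c) *s u + w) $ k = psi (z0 + ((c * s + d * t) / c) *s u) $ k"
      by (intro constant_along flat_w) (use in_ball[OF shifted[OF st] zero] in_ball[OF st_r] in \<open>simp_all add: sum\<close>)
    then show "psi (z0 + s *s u + t *s v) $ k = psi (z0 + ((c * s + d * t) / c) *s u) $ k"
      by (simp only: sum)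
  qed
qed

lemma deriv_has_field_derivative_on_ball:
  fixes f :: "complex \<Rightarrow> complex"
  assumes "\<And>s. cmod s < r \<Longrightarrow> (f has_field_derivative f' s) (at s)" and "cmod x < r"
  shows "(deriv f has_field_derivative deriv (deriv f) x) (at x)"
proof -
  have "f holomorphic_on ball 0 r"
    unfolding holomorphic_on_open[OF open_ball] using assms(1) by (metis mem_ball_0)
  then have "deriv f field_differentiable at x"
    using holomorphic_on_imp_differentiable_at[OF holomorphic_deriv[OF _ open_ball] open_ball] assms(2)
    by simp
  then show ?thesis using DERIV_deriv_iff_field_differentiable by blast
qed

lemma linear_web_of_parallelizable:
  fixes i j k :: 3
  assumes "web_regular a p" "locally_parallelizable_at a p" and ijk: "i \<noteq> j" "i \<noteq> k" "j \<noteq> k"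
  obtains c d \<rho> f g h f' g' h' f2 where
    "linear_web (lin_coeff a i) (lin_coeff a j) (lin_coeff a k) (a$4) c d \<rho> f g h f' g' h'"
    "\<rho> > 0" "(f' has_field_derivative f2) (at 0)" "d \<noteq> 0" "f' 0 \<noteq> 0" "g' 0 \<noteq> 0"
    "f 0 = p$i" "g 0 = p$j" "h 0 = p$k"
proof -
  obtain psi Dpsi V z0 v u d c where holo: "holo_map psi Dpsi V" and "z0 \<in> V" "psi z0 = p"
    and on_surface: "\<And>z. z \<in> V \<Longrightarrow> Fa a (psi z) = 0"
    and flat: "\<And>z. z \<in> V \<Longrightarrow> Dpsi z v $ i = 0" "\<And>z. z \<in> V \<Longrightarrow> Dpsi z u $ j = 0"
      "\<And>z. z \<in> V \<Longrightarrow> Dpsi z (d *s u - c *s v) $ k = 0"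
    and nonflat: "Dpsi z0 u $ i \<noteq> 0" "Dpsi z0 v $ j \<noteq> 0" and "c \<noteq> 0" "d \<noteq> 0"
    using parallelizable_chart[OF assms] by blast
  obtain \<rho> r where "0 < \<rho>" "\<rho> \<le> r"
    and in_V: "\<And>s t. cmod s < r \<Longrightarrow> cmod t < r \<Longrightarrow> z0 + s *s u + t *s v \<in> V"
    and shifted: "\<And>s t. cmod s < \<rho> \<Longrightarrow> cmod t < \<rho> \<Longrightarrow> cmod ((c * s + d * t) / c) < r"
    and coords: "\<And>s t. cmod s < \<rho> \<Longrightarrow> cmod t < \<rho> \<Longrightarrow> psi (z0 + s *s u + t *s v) $ i = psi (z0 + s *s u) $ i"
      "\<And>s t. cmod s < \<rho> \<Longrightarrow> cmod t < \<rho> \<Longrightarrow> psi (z0 + s *s u + t *s v) $ j = psi (z0 + t *s v) $ j"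
      "\<And>s t. cmod s < \<rho> \<Longrightarrow> cmod t < \<rho> \<Longrightarrow>
         psi (z0 + s *s u + t *s v) $ k = psi (z0 + ((c * s + d * t) / c) *s u) $ k"
    using linear_coordinates_of_flat_directions[OF holo \<open>z0 \<in> V\<close> \<open>c \<noteq> 0\<close> flat] by blast
  define f where "f = (\<lambda>s. psi (z0 + s *s u) $ i)"
  define g where "g = (\<lambda>t. psi (z0 + t *s v) $ j)"
  define h where "h = (\<lambda>w. psi (z0 + (w / c) *s u) $ k)"
  define g' where "g' t = Dpsi (z0 + t *s v) v $ j" for t
  define h' where "h' w = Dpsi (z0 + (w / c) *s u) u $ k / c" for w
  have zero: "cmod (0::complex) < r" using \<open>0 < \<rho>\<close> \<open>\<rho> \<le> r\<close> by simp
  have f_deriv: "(f has_field_derivative Dpsi (z0 + s *s u) u $ i) (at s)" if "cmod s < r" for s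
    using holo_map_line_deriv[OF holo, of z0 s u i] in_V[OF that zero] by (simp add: f_def)
  have g_deriv: "(g has_field_derivative g' t) (at t)" if "cmod t < r" for t
    using holo_map_line_deriv[OF holo, of z0 t v j] in_V[OF zero that] by (simp add: g_def g'_def)
  have h_deriv: "(h has_field_derivative h' w) (at w)" if "cmod (w / c) < r" for w
  proof -
    have "((\<lambda>w. w / c) has_field_derivative 1 / c) (at w)"
      using \<open>c \<noteq> 0\<close> by (auto intro!: derivative_eq_intros)
    from DERIV_chain2[OF holo_map_line_deriv[OF holo, of z0 "w / c" u k] this]
    show ?thesis using in_V[OF that zero] by (simp add: h_def h'_def)
  qed
  have f'_eq: "deriv f s = Dpsi (z0 + s *s u) u $ i" if "cmod s < r" for s
    using DERIV_imp_deriv[OF f_deriv[OF that]] .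
  show thesis
  proof (rule that[of _ _ \<rho> f g h "deriv f" g' h' "deriv (deriv f) 0"])
    show "linear_web (lin_coeff a i) (lin_coeff a j) (lin_coeff a k) (a$4) c d \<rho> f g h (deriv f) g' h'"
    proof
      fix s t assume st: "cmod s < \<rho>" "cmod t < \<rho>"
      then have st_r: "cmod s < r" "cmod t < r" using \<open>\<rho> \<le> r\<close> by simp_all
      let ?x = "psi (z0 + s *s u + t *s v)"
      have "cubic (lin_coeff a 1) (lin_coeff a 2) (lin_coeff a 3) (a$4) (?x$1) (?x$2) (?x$3) = 0"
        using on_surface[OF in_V[OF st_r]] by (simp add: Fa_eq_cubic)
      then show "cubic (lin_coeff a i) (lin_coeff a j) (lin_coeff a k) (a$4) (f s) (g t) (h (c * s + d * t)) = 0"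
        using cubic_permute[OF ijk, of "lin_coeff a" "a$4" ?x] coords[OF st] by (simp add: f_def g_def h_def)
      show "(h has_field_derivative h' (c * s + d * t)) (at (c * s + d * t))"
        by (rule h_deriv[OF shifted[OF st]])
    next
      show "(f has_field_derivative deriv f s) (at s)" if "cmod s < \<rho>" for s
        using f_deriv f'_eq that \<open>\<rho> \<le> r\<close> by simp
      show "(g has_field_derivative g' t) (at t)" if "cmod t < \<rho>" for t
        using g_deriv that \<open>\<rho> \<le> r\<close> by simp
    qed
    show "(deriv f has_field_derivative deriv (deriv f) 0) (at 0)"
      using f_deriv zero by (rule deriv_has_field_derivative_on_ball)
    show "deriv f 0 \<noteq> 0" using f'_eq[OF zero] nonflat(1) by simp
    show "g' 0 \<noteq> 0" using nonflat(2) by (simp add: g'_def)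
    show "f 0 = p$i" "g 0 = p$j" "h 0 = p$k" using \<open>psi z0 = p\<close> by (simp_all add: f_def g_def h_def)
  qed fact+
qed

lemma parallelizable_imp_obstruction_vanishes:
  fixes i j k :: 3
  assumes "web_regular a x" "locally_parallelizable_at a x" and "i \<noteq> j" "i \<noteq> k" "j \<noteq> k"
  shows "web_obstruction (lin_coeff a i) (lin_coeff a j) (lin_coeff a k) (x$i) (x$j) (x$k) = 0"
    and "web_obstruction (- lin_coeff a i) (- lin_coeff a j) (lin_coeff a k) (- x$i) (- x$j) (x$k) = 0"
proof -
  obtain c d \<rho> f g h f' g' h' f2 where
    web: "linear_web (lin_coeff a i) (lin_coeff a j) (lin_coeff a k) (a$4) c d \<rho> f g h f' g' h'"
    and "\<rho> > 0" "(f' has_field_derivative f2) (at 0)" "d \<noteq> 0" "f' 0 \<noteq> 0" "g' 0 \<noteq> 0"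
    and "f 0 = x$i" "g 0 = x$j" "h 0 = x$k"
    by (rule linear_web_of_parallelizable[OF assms]) (rule that)
  then show "web_obstruction (lin_coeff a i) (lin_coeff a j) (lin_coeff a k) (x$i) (x$j) (x$k) = 0"
    "web_obstruction (- lin_coeff a i) (- lin_coeff a j) (lin_coeff a k) (- x$i) (- x$j) (x$k) = 0"
    using linear_web.obstruction_vanishes[OF web]
      linear_web.obstruction_vanishes[OF linear_web.neg_first_two[OF web]] DERIV_minus
    by fastforce+
qed

section \<open>Regular points where the obstruction does not vanish\<close>

definition obstructed_point :: "complex \<Rightarrow> complex \<Rightarrow> complex \<Rightarrow> complex \<Rightarrow> complex \<Rightarrow> complex \<Rightarrow> complex \<Rightarrow> bool"
  where "obstructed_point b1 b2 b3 b4 y1 y2 y3 \<longleftrightarrow>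
    cubic b1 b2 b3 b4 y1 y2 y3 = 0 \<and> web_M b1 b2 b3 y1 y2 y3 \<noteq> 0 \<and> web_obstruction b1 b2 b3 y1 y2 y3 \<noteq> 0"

definition slice_term :: "complex poly \<Rightarrow> complex \<Rightarrow> nat \<Rightarrow> nat \<Rightarrow> complex poly"
  where "slice_term p c i j = smult c (p^i * monom 1 j)"

lemma poly_slice_term: "poly (slice_term p c i j) u = c * poly p u ^ i * u ^ j"
  by (simp add: slice_term_def poly_monom)

lemma coeff_slice_term:
  assumes "degree p = 2" "2 * i + j \<le> n"
  shows "coeff (slice_term p c i j) n = (if n = 2 * i + j then c * lead_coeff p ^ i else 0)"
proof -
  have "p \<noteq> 0" using assms(1) by auto
  then have degree: "degree (p^i * monom 1 j) = 2 * i + j"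
    by (simp add: degree_mult_eq degree_power_eq assms(1) degree_monom_eq)
  show ?thesis
  proof (cases "n = 2 * i + j")
    case True
    have "coeff (p^i * monom 1 j) (degree (p^i) + degree (monom (1::complex) j)) = lead_coeff p ^ i"
      by (simp only: coeff_mult_degree_sum lead_coeff_power) (simp add: degree_monom_eq)
    moreover have "degree (p^i) + degree (monom (1::complex) j) = n"
      using True \<open>p \<noteq> 0\<close> by (simp add: degree_power_eq assms(1) degree_monom_eq)
    ultimately show ?thesis using True by (simp add: slice_term_def)
  next
    case False
    then have "n > degree (p^i * monom 1 j)" using degree assms(2) by simp
    then show ?thesis using False by (simp add: slice_term_def coeff_eq_0)
  qed
qed

text \<open>The expansion of \<open>web_obstruction b1 b2 b3 2 x (s - x)\<close> as \<open>\<Sum> c\<^sub>i\<^sub>j x\<^sup>i s\<^sup>j\<close>, with a polynomial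
  \<open>p(s)\<close> substituted for \<open>x\<close>, ordered by the weight \<open>2 i + j\<close>. For \<open>deg p = 2\<close> only the two terms
  of weight 13 reach degree 13.\<close>

definition obstruction_on_slice :: "complex poly \<Rightarrow> complex \<Rightarrow> complex \<Rightarrow> complex \<Rightarrow> complex poly"
  where "obstruction_on_slice p b1 b2 b3 =
     slice_term p (16 * b2 - 16 * b3) 6 1
   + slice_term p (- 32) 5 3
   + slice_term p (- 4 * b2^2 + 4 * b3^2) 6 0
   + slice_term p (- 24 * b2 + 72 * b3) 5 2
   + slice_term p 80 4 4
   + slice_term p (- 24 * b3^2) 5 1
   + slice_term p (- 120 * b3) 4 3
   + slice_term p (- 64) 3 5
   + slice_term p (2 * b2^3 + 2 * b3^3) 5 0
   + slice_term p (12 * b2^2 + 48 * b3^2) 4 2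
   + slice_term p (8 * b2 + 88 * b3) 3 4
   + slice_term p 16 2 6
   + slice_term p (48 * b1 * b2 - 48 * b1 * b3 - 4 * b2^3 - 192 * b2 - 6 * b3^3 + 192 * b3) 4 1
   + slice_term p (- 64 * b1 - 8 * b2^2 - 40 * b3^2 + 256) 3 3
   + slice_term p (- 24 * b3) 2 5
   + slice_term p (- 12 * b1 * b2^2 + 12 * b1 * b3^2 + 48 * b2^2 - 48 * b3^2) 4 0
   + slice_term p (- 48 * b1 * b2 + 144 * b1 * b3 + 2 * b2^3 + 192 * b2 + 6 * b3^3 - 576 * b3) 3 2
   + slice_term p (96 * b1 + 12 * b3^2 - 384) 2 4
   + slice_term p (- 48 * b1 * b3^2 + 192 * b3^2) 3 1
   + slice_term p (- 144 * b1 * b3 - 2 * b3^3 + 576 * b3) 2 3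
   + slice_term p (- 32 * b1 + 256) 1 5
   + slice_term p (4 * b1 * b2^3 + 4 * b1 * b3^3 - 16 * b2^3 - 16 * b3^3) 3 0
   + slice_term p (12 * b1 * b2^2 + 60 * b1 * b3^2 - 48 * b2^2 - 240 * b3^2) 2 2
   + slice_term p (48 * b1 * b3 - 160 * b2 - 352 * b3) 1 4
   + slice_term p (- 64) 0 6
   + slice_term p (48 * b1^2 * b2 - 48 * b1^2 * b3 - 4 * b1 * b2^3 - 384 * b1 * b2 - 8 * b1 * b3^3 + 384 * b1 * b3 + 16 * b2^3 + 768 * b2 + 32 * b3^3 - 768 * b3) 2 1
   + slice_term p (- 32 * b1^2 - 24 * b1 * b3^2 + 256 * b1 + 64 * b2^2 + 192 * b2 * b3 + 160 * b3^2 - 512) 1 3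
   + slice_term p (64 * b2 + 96 * b3) 0 5
   + slice_term p (- 12 * b1^2 * b2^2 + 12 * b1^2 * b3^2 + 96 * b1 * b2^2 - 96 * b1 * b3^2 - 192 * b2^2 + 192 * b3^2) 2 0
   + slice_term p (- 24 * b1^2 * b2 + 72 * b1^2 * b3 + 192 * b1 * b2 + 4 * b1 * b3^3 - 576 * b1 * b3 - 8 * b2^3 - 72 * b2^2 * b3 - 72 * b2 * b3^2 - 384 * b2 - 24 * b3^3 + 1152 * b3) 1 2
   + slice_term p (16 * b1^2 - 128 * b1 - 16 * b2^2 - 96 * b2 * b3 - 48 * b3^2 + 256) 0 4
   + slice_term p (- 24 * b1^2 * b3^2 + 192 * b1 * b3^2 + 8 * b2^3 * b3 + 24 * b2^2 * b3^2 + 8 * b2 * b3^3 - 384 * b3^2) 1 1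
   + slice_term p (- 24 * b1^2 * b3 + 192 * b1 * b3 + 24 * b2^2 * b3 + 48 * b2 * b3^2 + 8 * b3^3 - 384 * b3) 0 3
   + slice_term p (2 * b1^2 * b2^3 + 2 * b1^2 * b3^3 - 16 * b1 * b2^3 - 16 * b1 * b3^3 - 2 * b2^3 * b3^2 + 32 * b2^3 - 2 * b2^2 * b3^3 + 32 * b3^3) 1 0
   + slice_term p (12 * b1^2 * b3^2 - 96 * b1 * b3^2 - 12 * b2^2 * b3^2 - 8 * b2 * b3^3 + 192 * b3^2) 0 2
   + slice_term p (16 * b1^3 * b2 - 16 * b1^3 * b3 - 192 * b1^2 * b2 - 2 * b1^2 * b3^3 + 192 * b1^2 * b3 + 768 * b1 * b2 + 16 * b1 * b3^3 - 768 * b1 * b3 + 2 * b2^2 * b3^3 - 1024 * b2 - 32 * b3^3 + 1024 * b3) 0 1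
   + slice_term p (- 4 * b1^3 * b2^2 + 4 * b1^3 * b3^2 + 48 * b1^2 * b2^2 - 48 * b1^2 * b3^2 - 192 * b1 * b2^2 + 192 * b1 * b3^2 + 256 * b2^2 - 256 * b3^2) 0 0"

lemma poly_obstruction_on_slice:
  "poly (obstruction_on_slice p b1 b2 b3) u = web_obstruction b1 b2 b3 2 (poly p u) (u - poly p u)"
  unfolding obstruction_on_slice_def poly_add poly_slice_term web_obstruction_def web_M_def web_N_def
    web_M_d2_def web_M_d3_def web_N_d2_def web_N_d3_def cubic_partial_def Let_def
  by algebra

lemma coeff_obstruction_on_slice:
  assumes "degree p = 2"
  shows "coeff (obstruction_on_slice p b1 b2 b3) 13 = 16 * (b2 - b3) * lead_coeff p ^ 6 - 32 * lead_coeff p ^ 5"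
  unfolding obstruction_on_slice_def by (simp add: coeff_slice_term[OF assms] algebra_simps)

lemma obstructed_point_exists:
  assumes "b2 \<noteq> b3"
  shows "\<exists>y1 y2 y3. obstructed_point b1 b2 b3 b4 y1 y2 y3"
proof -
  define \<delta> where "\<delta> = b2 - b3"
  \<comment> \<open>on the slice \<open>y\<^sub>1 = 2\<close>, with \<open>s = y\<^sub>2 + y\<^sub>3\<close> fixed, the cubic is linear in \<open>y\<^sub>2\<close> and solved by \<open>y\<^sub>2 = p(s)\<close>\<close>
  define p where "p = smult (1 / \<delta>) [:4 - 2 * b1 - b4, - b3, 1:]"
  have "\<delta> \<noteq> 0" using assms by (simp add: \<delta>_def)
  then have "degree p = 2" and lead: "lead_coeff p = 1 / \<delta>" by (simp_all add: p_def)
  have "coeff (obstruction_on_slice p b1 b2 b3) 13 = - 16 / \<delta>^5"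
    unfolding coeff_obstruction_on_slice[OF \<open>degree p = 2\<close>] lead using \<open>\<delta> \<noteq> 0\<close>
    by (simp add: \<delta>_def[symmetric] field_simps) (simp add: power_Suc[symmetric])
  then have "obstruction_on_slice p b1 b2 b3 \<noteq> 0" using \<open>\<delta> \<noteq> 0\<close> by auto
  define q1 where "q1 = [:4 - b1:] + slice_term p 1 1 1 - slice_term p 1 2 0"
  have "coeff q1 4 = - 1 / \<delta>^2"
    unfolding q1_def by (simp add: coeff_slice_term[OF \<open>degree p = 2\<close>] lead numeral_eq_Suc power_one_over)
  then have "q1 \<noteq> 0" using \<open>\<delta> \<noteq> 0\<close> by auto
  then have "obstruction_on_slice p b1 b2 b3 * q1 * [:- b2, 2:] * [:- b3, 2:] \<noteq> 0"
    using \<open>obstruction_on_slice p b1 b2 b3 \<noteq> 0\<close> by (intro no_zero_divisors) auto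
  then obtain u where "poly (obstruction_on_slice p b1 b2 b3 * q1 * [:- b2, 2:] * [:- b3, 2:]) u \<noteq> 0"
    using poly_all_0_iff_0 by blast
  then have u: "poly (obstruction_on_slice p b1 b2 b3) u \<noteq> 0"
    "poly q1 u * poly [:- b2, 2:] u * poly [:- b3, 2:] u \<noteq> 0"
    unfolding poly_mult mult_eq_0_iff by blast+
  define y2 where "y2 = poly p u"
  have "\<delta> * y2 = u^2 - b3 * u + 4 - 2 * b1 - b4"
    using \<open>\<delta> \<noteq> 0\<close> by (simp add: y2_def p_def power2_eq_square algebra_simps)
  then have "cubic b1 b2 b3 b4 2 y2 (u - y2) = 0"
    by (simp add: cubic_def \<delta>_def power2_eq_square algebra_simps)
  moreover have "web_M b1 b2 b3 2 y2 (u - y2) = poly q1 u * poly [:- b2, 2:] u * poly [:- b3, 2:] u"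
    by (simp add: web_M_def q1_def cubic_partial_def poly_slice_term y2_def power2_eq_square algebra_simps)
  moreover have "web_obstruction b1 b2 b3 2 y2 (u - y2) = poly (obstruction_on_slice p b1 b2 b3) u"
    by (simp add: poly_obstruction_on_slice y2_def)
  ultimately have "obstructed_point b1 b2 b3 b4 2 y2 (u - y2)"
    using u unfolding obstructed_point_def by presburger
  then show ?thesis by blast
qed

lemma obstructed_point_exists_b0:
  assumes "b4 \<noteq> 4"
  shows "\<exists>y1 y2 y3. obstructed_point 0 0 0 b4 y1 y2 y3"
proof -
  define m where "m = csqrt (b4 - 4)"
  have m2: "m^2 = b4 - 4" by (simp add: m_def)
  then have "m \<noteq> 0" using assms by auto
  then have "[:4, m, -1:] * [:4, 0, -1:] * [:- (m^2), 2 * m:] * [:m^2 - 4, - 2 * m, 1:] \<noteq> 0"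
    by (intro no_zero_divisors) auto
  then obtain u where u: "poly ([:4, m, -1:] * [:4, 0, -1:] * [:- (m^2), 2 * m:] * [:m^2 - 4, - 2 * m, 1:]) u \<noteq> 0"
    using poly_all_0_iff_0 by blast
  have "cubic 0 0 0 b4 2 u (m - u) = 0"
    using m2 by (simp add: cubic_def power2_eq_square algebra_simps)
  moreover have "web_M 0 0 0 2 u (m - u) = (4 + m * u - u^2) * (2 * m)^2"
    by (simp add: web_M_def cubic_partial_def power2_eq_square algebra_simps)
  moreover have "web_obstruction 0 0 0 2 u (m - u) = 16 * (b4 - 4) * ((4 - u^2) * (u^2 - (m - u)^2) * ((m - u)^2 - 4))"
  proof -
    have "2^2 + u^2 + (m - u)^2 + 2 * u * (m - u) - 4 = b4 - 4"
      using m2 by (simp add: power2_eq_square algebra_simps)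
    then show ?thesis unfolding web_obstruction_b0 by (simp add: algebra_simps)
  qed
  moreover have "(4 + m * u - u^2) * (4 - u^2) * (u^2 - (m - u)^2) * ((m - u)^2 - 4) =
      poly ([:4, m, -1:] * [:4, 0, -1:] * [:- (m^2), 2 * m:] * [:m^2 - 4, - 2 * m, 1:]) u"
    by (simp add: power2_eq_square algebra_simps)
  ultimately have "obstructed_point 0 0 0 b4 2 u (m - u)"
    using u \<open>m \<noteq> 0\<close> assms by (auto simp: obstructed_point_def)
  then show ?thesis by blast
qed

section \<open>Parallelizability forces \<open>a = (0, 0, 0, 4)\<close>\<close>

lemma web_M_neg_neg: "web_M (- b1) (- b2) b3 (- y1) (- y2) y3 = web_M b1 b2 b3 y1 y2 y3"
  by (simp add: web_M_def cubic_partial_def algebra_simps)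

lemma web_M_permute:
  fixes i j k :: 3
  assumes "i \<noteq> j" "i \<noteq> k" "j \<noteq> k"
  shows "web_M (b 1) (b 2) (b 3) (x$1) (x$2) (x$3) = web_M (b i) (b j) (b k) (x$i) (x$j) (x$k)"
  using distinct_3_cases[OF assms] by (elim insertE emptyE) (simp_all add: web_M_def cubic_partial_def algebra_simps)

lemma web_regular_iff_web_M:
  "web_regular a p \<longleftrightarrow> Fa a p = 0 \<and> web_M (a$1) (a$2) (a$3) (p$1) (p$2) (p$3) \<noteq> 0"
  by (simp add: web_regular_iff web_M_def)

lemma web_regular_point_exists:
  fixes i j k :: 3
  assumes ijk: "i \<noteq> j" "i \<noteq> k" "j \<noteq> k"
    and "cubic (lin_coeff a i) (lin_coeff a j) (lin_coeff a k) (a$4) y1 y2 y3 = 0"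
    and "web_M (lin_coeff a i) (lin_coeff a j) (lin_coeff a k) y1 y2 y3 \<noteq> 0"
  obtains x where "web_regular a x" "x$i = y1" "x$j = y2" "x$k = y3"
proof -
  define x :: "complex^3" where "x = (\<chi> m. if m = i then y1 else if m = j then y2 else y3)"
  have coords: "x$i = y1" "x$j = y2" "x$k = y3" using ijk by (auto simp: x_def)
  have "Fa a x = 0"
    using cubic_permute[OF ijk, of "lin_coeff a" "a$4" x] assms(4) by (simp add: Fa_eq_cubic coords)
  moreover have "web_M (a$1) (a$2) (a$3) (x$1) (x$2) (x$3) \<noteq> 0"
    using web_M_permute[OF ijk, of "lin_coeff a" x] assms(5) by (simp add: coords)
  ultimately show thesis using that coords by (simp add: web_regular_iff_web_M)
qed

lemma no_obstructed_point:
  fixes i j k :: 3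
  assumes parallelizable: "\<forall>p. web_regular a p \<longrightarrow> locally_parallelizable_at a p"
    and ijk: "i \<noteq> j" "i \<noteq> k" "j \<noteq> k"
  shows "\<not> obstructed_point (lin_coeff a i) (lin_coeff a j) (lin_coeff a k) (a$4) y1 y2 y3"
    and "\<not> obstructed_point (- lin_coeff a i) (- lin_coeff a j) (lin_coeff a k) (a$4) y1 y2 y3"
proof -
  have vanishes: "web_obstruction (lin_coeff a i) (lin_coeff a j) (lin_coeff a k) (x$i) (x$j) (x$k) = 0
      \<and> web_obstruction (- lin_coeff a i) (- lin_coeff a j) (lin_coeff a k) (- x$i) (- x$j) (x$k) = 0"
    if "web_regular a x" for x
    using parallelizable_imp_obstruction_vanishes[OF that _ ijk] parallelizable that by blast
  show "\<not> obstructed_point (lin_coeff a i) (lin_coeff a j) (lin_coeff a k) (a$4) y1 y2 y3"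
  proof
    assume "obstructed_point (lin_coeff a i) (lin_coeff a j) (lin_coeff a k) (a$4) y1 y2 y3"
    then obtain x where "web_regular a x" "x$i = y1" "x$j = y2" "x$k = y3"
      "web_obstruction (lin_coeff a i) (lin_coeff a j) (lin_coeff a k) y1 y2 y3 \<noteq> 0"
      using web_regular_point_exists[OF ijk] unfolding obstructed_point_def by metis
    then show False using vanishes by blast
  qed
  show "\<not> obstructed_point (- lin_coeff a i) (- lin_coeff a j) (lin_coeff a k) (a$4) y1 y2 y3"
  proof
    assume "obstructed_point (- lin_coeff a i) (- lin_coeff a j) (lin_coeff a k) (a$4) y1 y2 y3"
    then have "cubic (lin_coeff a i) (lin_coeff a j) (lin_coeff a k) (a$4) (- y1) (- y2) y3 = 0"
      "web_M (lin_coeff a i) (lin_coeff a j) (lin_coeff a k) (- y1) (- y2) y3 \<noteq> 0"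
      "web_obstruction (- lin_coeff a i) (- lin_coeff a j) (lin_coeff a k) y1 y2 y3 \<noteq> 0"
      using cubic_neg_neg[of "lin_coeff a i" "lin_coeff a j" _ _ "- y1" "- y2"]
        web_M_neg_neg[of "lin_coeff a i" "lin_coeff a j" _ "- y1" "- y2"]
      by (auto simp: obstructed_point_def)
    then obtain x where "web_regular a x" "x$i = - y1" "x$j = - y2" "x$k = y3"
      "web_obstruction (- lin_coeff a i) (- lin_coeff a j) (lin_coeff a k) y1 y2 y3 \<noteq> 0"
      using web_regular_point_exists[OF ijk] by metis
    then show False using vanishes by force
  qed
qed

lemma parallelizable_imp_special_parameter:
  assumes parallelizable: "\<forall>p. web_regular a p \<longrightarrow> locally_parallelizable_at a p"
  shows "a$1 = 0 \<and> a$2 = 0 \<and> a$3 = 0 \<and> a$4 = 4"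
proof -
  have "lin_coeff a k = 0" if "i \<noteq> j" "i \<noteq> k" "j \<noteq> k" for i j k
  proof -
    have "lin_coeff a j = lin_coeff a k" "- lin_coeff a j = lin_coeff a k"
      using obstructed_point_exists no_obstructed_point[OF parallelizable that] by metis+
    then show ?thesis by simp
  qed
  from this[of 1 2 3] this[of 2 3 1] this[of 1 3 2] have "a$1 = 0" "a$2 = 0" "a$3 = 0" by simp_all
  moreover have "a$4 = 4"
    using obstructed_point_exists_b0 no_obstructed_point(1)[OF parallelizable, of 1 2 3] \<open>a$1 = 0\<close> \<open>a$2 = 0\<close> \<open>a$3 = 0\<close>
    by fastforce
  ultimately show ?thesis by simp
qed

section \<open>The Cayley cubic is parallelizable\<close>

lemma cayley_cos_param: "cubic 0 0 0 4 (2 * cos u) (2 * cos v) (- (2 * cos (u + v))) = 0"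
proof -
  have "sin u ^ 2 + cos u ^ 2 = 1" "sin v ^ 2 + cos v ^ 2 = 1" by simp_all
  then show ?thesis unfolding cubic_def cos_add by algebra
qed

lemma cayley_factor:
  "cubic 0 0 0 4 (2 * cos u) (2 * cos v) z = (z + 2 * cos (u + v)) * (z + 2 * cos (u - v))"
proof -
  have "sin u ^ 2 + cos u ^ 2 = 1" "sin v ^ 2 + cos v ^ 2 = 1" by simp_all
  then show ?thesis unfolding cubic_def cos_add cos_diff by algebra
qed

lemma cayley_partials:
  "cubic_partial 0 (2 * cos u) (2 * cos v) (- (2 * cos (u + v))) = 4 * sin v * sin (u + v)"
  "cubic_partial 0 (2 * cos v) (2 * cos u) (- (2 * cos (u + v))) = 4 * sin u * sin (u + v)"
  "cubic_partial 0 (- (2 * cos (u + v))) (2 * cos u) (2 * cos v) = 4 * sin u * sin v"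
proof -
  have "sin u ^ 2 + cos u ^ 2 = 1" "sin v ^ 2 + cos v ^ 2 = 1" by simp_all
  then show "cubic_partial 0 (2 * cos u) (2 * cos v) (- (2 * cos (u + v))) = 4 * sin v * sin (u + v)"
    "cubic_partial 0 (2 * cos v) (2 * cos u) (- (2 * cos (u + v))) = 4 * sin u * sin (u + v)"
    unfolding cubic_partial_def cos_add sin_add by algebra+
  show "cubic_partial 0 (- (2 * cos (u + v))) (2 * cos u) (2 * cos v) = 4 * sin u * sin v"
    unfolding cubic_partial_def cos_add by (simp add: algebra_simps)
qed

lemma cayley_point_cos_param:
  assumes "cubic 0 0 0 4 y1 y2 y3 = 0"
  obtains \<alpha> \<beta> where "y1 = 2 * cos \<alpha>" "y2 = 2 * cos \<beta>" "y3 = - (2 * cos (\<alpha> + \<beta>))"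
proof -
  define \<alpha> where "\<alpha> = Arccos (y1 / 2)"
  define \<beta> where "\<beta> = Arccos (y2 / 2)"
  have "y1 = 2 * cos \<alpha>" "y2 = 2 * cos \<beta>" "y2 = 2 * cos (- \<beta>)" by (simp_all add: \<alpha>_def \<beta>_def)
  moreover have "(y3 + 2 * cos (\<alpha> + \<beta>)) * (y3 + 2 * cos (\<alpha> + - \<beta>)) = 0"
    using assms cayley_factor[of \<alpha> \<beta> y3] by (simp add: \<alpha>_def \<beta>_def)
  ultimately show thesis using that by (metis add_eq_0_iff2 mult_eq_0_iff)
qed

definition cayley_param :: "complex^2 \<Rightarrow> complex^3"
  where "cayley_param z = vector [2 * cos (z$1), 2 * cos (z$2), - (2 * cos (z$1 + z$2))]"

definition cayley_param_deriv :: "complex^2 \<Rightarrow> complex^2 \<Rightarrow> complex^3"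
  where "cayley_param_deriv z w =
           vector [- 2 * sin (z$1) * w$1, - 2 * sin (z$2) * w$2, 2 * sin (z$1 + z$2) * (w$1 + w$2)]"

lemma has_derivative_vecI:
  fixes f :: "'a::real_normed_vector \<Rightarrow> complex^'n"
  assumes "\<And>i. ((\<lambda>x. f x $ i) has_derivative (\<lambda>h. f' h $ i)) (at z)"
  shows "(f has_derivative f') (at z)"
proof (subst has_derivative_componentwise_within, intro ballI)
  fix b :: "complex^'n" assume "b \<in> Basis"
  then obtain i u where b: "b = axis i u" unfolding Basis_vec_def by auto
  have "((\<lambda>x. inner (f x $ i) u) has_derivative (\<lambda>h. inner (f' h $ i) u)) (at z)"
    by (rule bounded_linear.has_derivative[OF bounded_linear_inner_left assms])
  then show "((\<lambda>x. f x \<bullet> b) has_derivative (\<lambda>x. f' x \<bullet> b)) (at z)"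
    by (simp add: b inner_axis)
qed

lemma cayley_param_has_derivative: "(cayley_param has_derivative cayley_param_deriv z) (at z)"
proof (rule has_derivative_vecI)
  fix m :: 3
  have chain: "((\<lambda>x. g (l x)) has_derivative (\<lambda>h. g' * l h)) (at z)"
    if "(g has_field_derivative g') (at (l z))" "(l has_derivative l) (at z)" for g g' and l :: "complex^2 \<Rightarrow> complex"
    using diff_chain_at[OF that(2) that(1)[unfolded has_field_derivative_def]] by (simp add: o_def)
  have "((\<lambda>x. 2 * cos (x$1)) has_derivative (\<lambda>h. - 2 * sin (z$1) * h$1)) (at z)"
    "((\<lambda>x. 2 * cos (x$2)) has_derivative (\<lambda>h. - 2 * sin (z$2) * h$2)) (at z)"
    "((\<lambda>x. - (2 * cos (x$1 + x$2))) has_derivative (\<lambda>h. 2 * sin (z$1 + z$2) * (h$1 + h$2))) (at z)"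
    by (rule chain[where g = "\<lambda>t. 2 * cos t"] chain[where g = "\<lambda>t. - (2 * cos t)"];
        auto intro!: derivative_eq_intros)+
  then show "((\<lambda>x. cayley_param x $ m) has_derivative (\<lambda>h. cayley_param_deriv z h $ m)) (at z)"
    using exhaust_3[of m] by (auto simp: cayley_param_def cayley_param_deriv_def)
qed

lemma local_inverse_2cos:
  fixes \<alpha> :: complex
  assumes "sin \<alpha> \<noteq> 0" "open A" "\<alpha> \<in> A"
  obtains U G where "open U" "\<alpha> \<in> U" "U \<subseteq> A" "open ((\<lambda>t. 2 * cos t) ` U)"
    "continuous_on ((\<lambda>t. 2 * cos t) ` U) G" "\<And>u. u \<in> U \<Longrightarrow> G (2 * cos u) = u"
proof -
  have holo: "(\<lambda>t. 2 * cos t) holomorphic_on S" for S by (auto intro!: holomorphic_intros)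
  have "deriv (\<lambda>t. 2 * cos t) \<alpha> = - 2 * sin \<alpha>"
    by (rule DERIV_imp_deriv) (auto intro!: derivative_eq_intros)
  then obtain r where "r > 0" "ball \<alpha> r \<subseteq> A" "inj_on (\<lambda>t. 2 * cos t) (ball \<alpha> r)"
    using has_complex_derivative_locally_injective[OF holo assms(3,2)] assms(1) by auto
  define U where "U = ball \<alpha> r"
  have "open U" "\<alpha> \<in> U" "U \<subseteq> A" "inj_on (\<lambda>t. 2 * cos t) U"
    using \<open>r > 0\<close> \<open>ball \<alpha> r \<subseteq> A\<close> \<open>inj_on _ (ball \<alpha> r)\<close> by (simp_all add: U_def)
  moreover obtain G where "G holomorphic_on (\<lambda>t. 2 * cos t) ` U" "\<And>u. u \<in> U \<Longrightarrow> G (2 * cos u) = u"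
    using holomorphic_has_inverse[OF holo \<open>open U\<close> \<open>inj_on _ U\<close>] by metis
  ultimately show thesis
    using that open_mapping_thm3[OF holo] holomorphic_on_imp_continuous_on by metis
qed

text \<open>Over \<open>(2 cos u, 2 cos v)\<close> the cubic has the two sheets \<open>- 2 cos (u \<plusminus> v)\<close>; near a regular
  point they stay apart.\<close>

lemma cayley_sheets_apart:
  fixes \<alpha> \<beta> :: complex
  assumes "sin \<alpha> \<noteq> 0" "sin \<beta> \<noteq> 0" "sin (\<alpha> + \<beta>) \<noteq> 0"
  obtains A B \<delta> where "open A" "open B" "\<alpha> \<in> A" "\<beta> \<in> B" "\<delta> > 0"
    "\<And>u v. u \<in> A \<Longrightarrow> v \<in> B \<Longrightarrow> sin u \<noteq> 0 \<and> sin v \<noteq> 0 \<and> sin (u + v) \<noteq> 0"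
    "\<And>u v. u \<in> A \<Longrightarrow> v \<in> B \<Longrightarrow> dist (- (2 * cos (u + v))) (- (2 * cos (\<alpha> + \<beta>))) < \<delta>"
    "\<And>u v. u \<in> A \<Longrightarrow> v \<in> B \<Longrightarrow> \<delta> < dist (- (2 * cos (u - v))) (- (2 * cos (\<alpha> + \<beta>)))"
proof -
  define \<delta> where "\<delta> = dist (- (2 * cos (\<alpha> - \<beta>))) (- (2 * cos (\<alpha> + \<beta>))) / 2"
  have "- (2 * cos (\<alpha> - \<beta>)) - (- (2 * cos (\<alpha> + \<beta>))) = - 4 * sin \<alpha> * sin \<beta>"
    by (simp add: cos_add cos_diff algebra_simps)
  then have "\<delta> > 0" using assms by (simp add: \<delta>_def dist_norm)
  define W where "W = {x :: complex \<times> complex. sin (fst x) \<noteq> 0 \<and> sin (snd x) \<noteq> 0 \<and> sin (fst x + snd x) \<noteq> 0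
     \<and> dist (- (2 * cos (fst x + snd x))) (- (2 * cos (\<alpha> + \<beta>))) < \<delta>
     \<and> \<delta> < dist (- (2 * cos (fst x - snd x))) (- (2 * cos (\<alpha> + \<beta>)))}"
  have "open W"
    unfolding W_def Collect_conj_eq
    by (intro open_Int open_Collect_neq open_Collect_less continuous_intros)
  moreover have "(\<alpha>, \<beta>) \<in> W" using assms \<open>\<delta> > 0\<close> by (simp add: W_def \<delta>_def)
  ultimately obtain A B where "open A" "open B" "(\<alpha>, \<beta>) \<in> A \<times> B" "A \<times> B \<subseteq> W"
    by (rule open_prod_elim)
  then have "(u, v) \<in> W" if "u \<in> A" "v \<in> B" for u v using that by blast
  then show thesis
    by (intro that[OF \<open>open A\<close> \<open>open B\<close> _ _ \<open>\<delta> > 0\<close>]) (use \<open>(\<alpha>, \<beta>) \<in> A \<times> B\<close> in \<open>auto simp: W_def\<close>)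
qed

lemma cayley_chart_domains:
  fixes \<alpha> \<beta> :: complex
  assumes "sin \<alpha> \<noteq> 0" "sin \<beta> \<noteq> 0" "sin (\<alpha> + \<beta>) \<noteq> 0"
  obtains U1 U2 G1 G2 \<delta> where "open U1" "open U2" "\<alpha> \<in> U1" "\<beta> \<in> U2"
    "open ((\<lambda>t. 2 * cos t) ` U1)" "open ((\<lambda>t. 2 * cos t) ` U2)"
    "continuous_on ((\<lambda>t. 2 * cos t) ` U1) G1" "\<And>u. u \<in> U1 \<Longrightarrow> G1 (2 * cos u) = u"
    "continuous_on ((\<lambda>t. 2 * cos t) ` U2) G2" "\<And>v. v \<in> U2 \<Longrightarrow> G2 (2 * cos v) = v"
    "\<And>u v. u \<in> U1 \<Longrightarrow> v \<in> U2 \<Longrightarrow> sin u \<noteq> 0 \<and> sin v \<noteq> 0 \<and> sin (u + v) \<noteq> 0"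
    "\<And>u v. u \<in> U1 \<Longrightarrow> v \<in> U2 \<Longrightarrow> dist (- (2 * cos (u + v))) (- (2 * cos (\<alpha> + \<beta>))) < \<delta>"
    "\<And>u v. u \<in> U1 \<Longrightarrow> v \<in> U2 \<Longrightarrow> \<delta> < dist (- (2 * cos (u - v))) (- (2 * cos (\<alpha> + \<beta>)))"
proof -
  obtain A B \<delta> where "open A" "open B" "\<alpha> \<in> A" "\<beta> \<in> B" "\<delta> > 0"
    and apart: "\<And>u v. u \<in> A \<Longrightarrow> v \<in> B \<Longrightarrow> sin u \<noteq> 0 \<and> sin v \<noteq> 0 \<and> sin (u + v) \<noteq> 0"
      "\<And>u v. u \<in> A \<Longrightarrow> v \<in> B \<Longrightarrow> dist (- (2 * cos (u + v))) (- (2 * cos (\<alpha> + \<beta>))) < \<delta>"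
      "\<And>u v. u \<in> A \<Longrightarrow> v \<in> B \<Longrightarrow> \<delta> < dist (- (2 * cos (u - v))) (- (2 * cos (\<alpha> + \<beta>)))"
    by (rule cayley_sheets_apart[OF assms]) (rule that)
  obtain U1 G1 where U1: "open U1" "\<alpha> \<in> U1" "U1 \<subseteq> A" "open ((\<lambda>t. 2 * cos t) ` U1)"
    "continuous_on ((\<lambda>t. 2 * cos t) ` U1) G1" "\<And>u. u \<in> U1 \<Longrightarrow> G1 (2 * cos u) = u"
    by (rule local_inverse_2cos[OF \<open>sin \<alpha> \<noteq> 0\<close> \<open>open A\<close> \<open>\<alpha> \<in> A\<close>]) (rule that)
  obtain U2 G2 where U2: "open U2" "\<beta> \<in> U2" "U2 \<subseteq> B" "open ((\<lambda>t. 2 * cos t) ` U2)"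
    "continuous_on ((\<lambda>t. 2 * cos t) ` U2) G2" "\<And>v. v \<in> U2 \<Longrightarrow> G2 (2 * cos v) = v"
    by (rule local_inverse_2cos[OF \<open>sin \<beta> \<noteq> 0\<close> \<open>open B\<close> \<open>\<beta> \<in> B\<close>]) (rule that)
  show thesis
  proof (rule that[OF U1(1) U2(1) U1(2) U2(2) U1(4) U2(4) U1(5,6) U2(5,6)])
    fix u v assume "u \<in> U1" "v \<in> U2"
    then have "u \<in> A" "v \<in> B" using U1(3) U2(3) by auto
    then show "sin u \<noteq> 0 \<and> sin v \<noteq> 0 \<and> sin (u + v) \<noteq> 0"
      "dist (- (2 * cos (u + v))) (- (2 * cos (\<alpha> + \<beta>))) < \<delta>"
      "\<delta> < dist (- (2 * cos (u - v))) (- (2 * cos (\<alpha> + \<beta>)))"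
      by (rule apart(1), rule apart(2), rule apart(3))
  qed
qed

lemma cayley_param_deriv_parallel:
  assumes "\<And>z. z \<in> V \<Longrightarrow> sin (z$1) \<noteq> 0 \<and> sin (z$2) \<noteq> 0 \<and> sin (z$1 + z$2) \<noteq> 0"
  shows "\<forall>z\<in>V. inj (cayley_param_deriv z)"
    and "\<forall>m::3. \<exists>\<alpha> \<beta>::complex. (\<alpha>, \<beta>) \<noteq> (0, 0) \<and>
           (\<forall>z\<in>V. {w. cayley_param_deriv z w $ m = 0} = {w. \<alpha> * w$1 + \<beta> * w$2 = 0})"
proof -
  show "\<forall>z\<in>V. inj (cayley_param_deriv z)"
  proof (intro ballI injI)
    fix z w w' assume "z \<in> V" "cayley_param_deriv z w = cayley_param_deriv z w'"
    then have "cayley_param_deriv z w $ 1 = cayley_param_deriv z w' $ 1"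
      "cayley_param_deriv z w $ 2 = cayley_param_deriv z w' $ 2" by simp_all
    then show "w = w'" using assms[OF \<open>z \<in> V\<close>] by (simp add: cayley_param_deriv_def vec_eq_iff forall_2)
  qed
  have kernels: "\<forall>z\<in>V. {w. cayley_param_deriv z w $ 1 = 0} = {w. 1 * w$1 + 0 * w$2 = 0}"
    "\<forall>z\<in>V. {w. cayley_param_deriv z w $ 2 = 0} = {w. 0 * w$1 + 1 * w$2 = 0}"
    "\<forall>z\<in>V. {w. cayley_param_deriv z w $ 3 = 0} = {w. 1 * w$1 + 1 * w$2 = 0}"
    using assms by (auto simp: cayley_param_deriv_def)
  show "\<forall>m::3. \<exists>\<alpha> \<beta>::complex. (\<alpha>, \<beta>) \<noteq> (0, 0) \<and>
      (\<forall>z\<in>V. {w. cayley_param_deriv z w $ m = 0} = {w. \<alpha> * w$1 + \<beta> * w$2 = 0})"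
  proof (unfold forall_3, intro conjI)
    show "\<exists>\<alpha> \<beta>::complex. (\<alpha>, \<beta>) \<noteq> (0, 0) \<and>
        (\<forall>z\<in>V. {w. cayley_param_deriv z w $ 1 = 0} = {w. \<alpha> * w$1 + \<beta> * w$2 = 0})"
      using kernels(1) by (intro exI[of _ 1] exI[of _ 0]) simp
    show "\<exists>\<alpha> \<beta>::complex. (\<alpha>, \<beta>) \<noteq> (0, 0) \<and>
        (\<forall>z\<in>V. {w. cayley_param_deriv z w $ 2 = 0} = {w. \<alpha> * w$1 + \<beta> * w$2 = 0})"
      using kernels(2) by (intro exI[of _ 0] exI[of _ 1]) simp
    show "\<exists>\<alpha> \<beta>::complex. (\<alpha>, \<beta>) \<noteq> (0, 0) \<and>
        (\<forall>z\<in>V. {w. cayley_param_deriv z w $ 3 = 0} = {w. \<alpha> * w$1 + \<beta> * w$2 = 0})"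
      using kernels(3) by (intro exI[of _ 1] exI[of _ 1]) simp
  qed
qed

lemma holo_map_cayley_param: "open V \<Longrightarrow> holo_map cayley_param cayley_param_deriv V"
  unfolding holo_map_def
  by (simp add: cayley_param_has_derivative cayley_param_deriv_def vec_eq_iff forall_3 algebra_simps)

lemma cayley_param_homeomorphism:
  assumes a: "a$1 = 0" "a$2 = 0" "a$3 = 0" "a$4 = 4"
    and G1: "continuous_on ((\<lambda>t. 2 * cos t) ` U1) G1" "\<And>u. u \<in> U1 \<Longrightarrow> G1 (2 * cos u) = u"
    and G2: "continuous_on ((\<lambda>t. 2 * cos t) ` U2) G2" "\<And>v. v \<in> U2 \<Longrightarrow> G2 (2 * cos v) = v"
    and sheets: "\<And>u v. u \<in> U1 \<Longrightarrow> v \<in> U2 \<Longrightarrow> dist (- (2 * cos (u + v))) y3 < \<delta>"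
      "\<And>u v. u \<in> U1 \<Longrightarrow> v \<in> U2 \<Longrightarrow> \<delta> < dist (- (2 * cos (u - v))) y3"
  shows "homeomorphism {z. z$1 \<in> U1 \<and> z$2 \<in> U2}
           (Sa a \<inter> {x. x$1 \<in> (\<lambda>t. 2 * cos t) ` U1 \<and> x$2 \<in> (\<lambda>t. 2 * cos t) ` U2 \<and> x$3 \<in> ball y3 \<delta>})
           cayley_param (\<lambda>x. \<chi> m. if m = 1 then G1 (x$1) else G2 (x$2))"
    (is "homeomorphism ?V ?T cayley_param ?\<phi>")
proof
  have Fa_eq: "Fa a x = cubic 0 0 0 4 (x$1) (x$2) (x$3)" for x
    using a by (simp add: Fa_eq_cubic)
  show "continuous_on ?V cayley_param"
    using cayley_param_has_derivative has_derivative_continuous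
    by (blast intro: continuous_at_imp_continuous_on)
  have "continuous_on ?T (\<lambda>x. G1 (x$1))"
    by (rule continuous_on_compose2[OF G1(1) continuous_on_component[OF continuous_on_id]]) auto
  moreover have "continuous_on ?T (\<lambda>x. G2 (x$2))"
    by (rule continuous_on_compose2[OF G2(1) continuous_on_component[OF continuous_on_id]]) auto
  ultimately have "continuous_on ?T (\<lambda>x. if m = 1 then G1 (x$1) else G2 (x$2))" for m :: 2
    by (cases "m = 1") simp_all
  then show "continuous_on ?T ?\<phi>" by (rule continuous_on_vec_lambda)
  show "cayley_param ` ?V \<subseteq> ?T"
    using cayley_cos_param sheets(1)
    by (auto simp: Fa_eq cayley_param_def Sa_def dist_commute)
  show "?\<phi> (cayley_param z) = z" if "z \<in> ?V" for z
    using that G1(2) G2(2) by (simp add: cayley_param_def vec_eq_iff forall_2)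
  have "?\<phi> x \<in> ?V \<and> cayley_param (?\<phi> x) = x" if x_in: "x \<in> ?T" for x
  proof -
    obtain u v where uv: "u \<in> U1" "v \<in> U2" "x$1 = 2 * cos u" "x$2 = 2 * cos v"
      using x_in by blast
    then have "(x$3 + 2 * cos (u + v)) * (x$3 + 2 * cos (u - v)) = 0"
      using x_in cayley_factor[of u v "x$3"] by (simp add: Fa_eq Sa_def)
    moreover have "x$3 \<noteq> - (2 * cos (u - v))"
      using x_in sheets(2)[OF uv(1,2)] by (auto simp: dist_commute)
    ultimately have "x$3 = - (2 * cos (u + v))"
      by (metis add_eq_0_iff2 mult_eq_0_iff)
    then show ?thesis using uv G1(2) G2(2) by (simp add: cayley_param_def vec_eq_iff forall_3)
  qed
  then show "?\<phi> ` ?T \<subseteq> ?V" "\<And>x. x \<in> ?T \<Longrightarrow> cayley_param (?\<phi> x) = x"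
    by (blast, blast)
qed

lemma special_parameter_imp_parallelizable:
  assumes a: "a$1 = 0" "a$2 = 0" "a$3 = 0" "a$4 = 4" and reg: "web_regular a p"
  shows "locally_parallelizable_at a p"
proof -
  have regular_iff: "web_regular a x \<longleftrightarrow> cubic 0 0 0 4 (x$1) (x$2) (x$3) = 0 \<and>
      cubic_partial 0 (x$1) (x$2) (x$3) \<noteq> 0 \<and> cubic_partial 0 (x$2) (x$1) (x$3) \<noteq> 0 \<and>
      cubic_partial 0 (x$3) (x$1) (x$2) \<noteq> 0" for x
    using a by (simp add: web_regular_iff Fa_eq_cubic)
  have "cubic 0 0 0 4 (p$1) (p$2) (p$3) = 0" using reg by (simp add: regular_iff)
  then obtain \<alpha> \<beta> where p: "p$1 = 2 * cos \<alpha>" "p$2 = 2 * cos \<beta>" "p$3 = - (2 * cos (\<alpha> + \<beta>))"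
    by (rule cayley_point_cos_param)
  then have "sin \<alpha> \<noteq> 0" "sin \<beta> \<noteq> 0" "sin (\<alpha> + \<beta>) \<noteq> 0"
    using reg by (auto simp: regular_iff cayley_partials)
  then obtain U1 U2 G1 G2 \<delta> where "open U1" "open U2" "\<alpha> \<in> U1" "\<beta> \<in> U2"
    and open_images: "open ((\<lambda>t. 2 * cos t) ` U1)" "open ((\<lambda>t. 2 * cos t) ` U2)"
    and G1: "continuous_on ((\<lambda>t. 2 * cos t) ` U1) G1" "\<And>u. u \<in> U1 \<Longrightarrow> G1 (2 * cos u) = u"
    and G2: "continuous_on ((\<lambda>t. 2 * cos t) ` U2) G2" "\<And>v. v \<in> U2 \<Longrightarrow> G2 (2 * cos v) = v"
    and sin_nonzero: "\<And>u v. u \<in> U1 \<Longrightarrow> v \<in> U2 \<Longrightarrow> sin u \<noteq> 0 \<and> sin v \<noteq> 0 \<and> sin (u + v) \<noteq> 0"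
    and apart: "\<And>u v. u \<in> U1 \<Longrightarrow> v \<in> U2 \<Longrightarrow> dist (- (2 * cos (u + v))) (- (2 * cos (\<alpha> + \<beta>))) < \<delta>"
      "\<And>u v. u \<in> U1 \<Longrightarrow> v \<in> U2 \<Longrightarrow> \<delta> < dist (- (2 * cos (u - v))) (- (2 * cos (\<alpha> + \<beta>)))"
    by (rule cayley_chart_domains) (rule that)
  have sheets: "dist (- (2 * cos (u + v))) (p$3) < \<delta>" "\<delta> < dist (- (2 * cos (u - v))) (p$3)"
    if "u \<in> U1" "v \<in> U2" for u v
    unfolding p(3) using apart that by blast+
  define V where "V = {z :: complex^2. z$1 \<in> U1 \<and> z$2 \<in> U2}"
  define N where "N = {x :: complex^3. x$1 \<in> (\<lambda>t. 2 * cos t) ` U1 \<and> x$2 \<in> (\<lambda>t. 2 * cos t) ` U2 \<and> x$3 \<in> ball (p$3) \<delta>}"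
  define \<phi> :: "complex^3 \<Rightarrow> complex^2" where "\<phi> = (\<lambda>x. \<chi> m. if m = 1 then G1 (x$1) else G2 (x$2))"
  have hom: "homeomorphism V (Sa a \<inter> N) cayley_param \<phi>"
    unfolding V_def N_def \<phi>_def by (rule cayley_param_homeomorphism[OF a G1 G2 sheets])
  have sin_nonzero_V: "sin (z$1) \<noteq> 0 \<and> sin (z$2) \<noteq> 0 \<and> sin (z$1 + z$2) \<noteq> 0" if "z \<in> V" for z
    using sin_nonzero that by (auto simp: V_def)
  have "V = (\<lambda>z. z$1) -` U1 \<inter> (\<lambda>z. z$2) -` U2" by (auto simp: V_def)
  then have "open V" using \<open>open U1\<close> \<open>open U2\<close> by (simp add: open_Int open_vimage_vec_nth)
  have "N = (\<lambda>x. x$1) -` ((\<lambda>t. 2 * cos t) ` U1) \<inter> (\<lambda>x. x$2) -` ((\<lambda>t. 2 * cos t) ` U2)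
      \<inter> (\<lambda>x. x$3) -` ball (p$3) \<delta>"
    by (auto simp: N_def)
  then have "open N" using open_images by (simp add: open_Int open_vimage_vec_nth)
  have "p \<in> N"
    using \<open>\<alpha> \<in> U1\<close> \<open>\<beta> \<in> U2\<close> sheets(1)[OF \<open>\<alpha> \<in> U1\<close> \<open>\<beta> \<in> U2\<close>] by (auto simp: N_def p)
  have regular: "Sa a \<inter> N \<subseteq> {q. web_regular a q}"
  proof
    fix x assume "x \<in> Sa a \<inter> N"
    then obtain z where "z \<in> V" "x = cayley_param z"
      using hom unfolding homeomorphism_def by blast
    then show "x \<in> {q. web_regular a q}"
      using sin_nonzero_V[OF \<open>z \<in> V\<close>]
      by (simp add: regular_iff cayley_param_def cayley_cos_param cayley_partials)
  qed
  show ?thesis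
    unfolding locally_parallelizable_at_def
    by (intro exI[of _ V] exI[of _ N] exI[of _ cayley_param] exI[of _ \<phi>] exI[of _ cayley_param_deriv]
          conjI \<open>open N\<close> \<open>p \<in> N\<close> regular holo_map_cayley_param[OF \<open>open V\<close>] hom
          cayley_param_deriv_parallel[OF sin_nonzero_V])
qed

theorem theorem1p1:
  fixes a :: "complex^4"
  shows "(\<forall>p. web_regular a p \<longrightarrow> locally_parallelizable_at a p) \<longleftrightarrow>
         (a$1 = 0 \<and> a$2 = 0 \<and> a$3 = 0 \<and> a$4 = 4)"
  using parallelizable_imp_special_parameter special_parameter_imp_parallelizable by blast

end
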